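(* Let $\omega=(\tilde\omega,\omega_d)\in\mathbb R^d$, $d\geq3$, be non-resonant with $\tilde\omega\in\mathbb R^{d-1}$ such that there is a sequence $\{\bar k_j\}\subset\mathbb Z^{d-1}$ with $\lim_{j\to\infty}\frac{\ln|\langle\tilde\omega,\bar k_j\rangle|}{\|\bar k_j\|}=-\infty$. There exists a real entire Hamiltonian $H$ on $\mathbb{T}^d\times\mathbb R^d$ of the form $H(\theta,r)=\langle\omega,r\rangle+\mathcal O(r^2)$ such that for every $(\theta,r)\in\mathbb{T}^d\times\mathbb R^d$ with $r_d\neq0$, $\limsup_{t\to\infty}|\Phi^t_H(\theta,r)|=\infty$. The Birkhoff normal form of $H$ at $\mathcal{T}_0=\mathbb{T}^d\times\{0\}$ is $N(r)=\langle\omega,r\rangle$.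
   Context: $\|k\|=\max_m|k_m|$; non-resonant means rationally independent coordinates. Real entire: extends holomorphically to $(\mathbb C/\mathbb Z)^d\times\mathbb C^d$, real on real arguments. $\Phi^t_H$ is the Hamiltonian flow for $d\theta\wedge dr$. Birkhoff normal form: formal power series $N_H(r)$ such that some formal series $f(\theta,r)=\sum_j a_j(\theta)r^j=\mathcal O(r^2)$ with coefficients real analytic near $\mathbb{T}^d$ satisfies $H(\theta,r+\partial_\theta f(\theta,r))=N_H(r)$. *)

theory Defs
  imports "HOL-Analysis.Analysis"
begin

definition cvec :: "real^'n \<Rightarrow> complex^'n" where
  "cvec x = (\<chi> i. complex_of_real (x $ i))"

definition cmul :: "complex \<Rightarrow> complex^'n \<Rightarrow> complex^'n" where
  "cmul c z = (\<chi> i. c * z $ i)"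

definition holo_on_vec :: "(complex^'n \<Rightarrow> complex) \<Rightarrow> (complex^'n) set \<Rightarrow> bool" where
  "holo_on_vec F U \<longleftrightarrow> (\<forall>z\<in>U. \<exists>L. (F has_derivative L) (at z) \<and>
      (\<forall>c v. L (cmul c v) = c * L v))"

definition entire2 :: "(complex^'n \<Rightarrow> complex^'n \<Rightarrow> complex) \<Rightarrow> bool" where
  "entire2 F \<longleftrightarrow> (\<forall>p. \<exists>L. ((\<lambda>q. F (fst q) (snd q)) has_derivative L) (at p) \<and>
      (\<forall>c v w. L (cmul c v, cmul c w) = c * L (v, w)))"

definition nonresonant :: "real^'n \<Rightarrow> bool" where
  "nonresonant \<omega> \<longleftrightarrow> (\<forall>k::int^'n. (\<Sum>i\<in>UNIV. of_int (k $ i) * \<omega> $ i) = 0 \<longrightarrow> k = 0)"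

definition supnorm_int :: "int^'n \<Rightarrow> int" where
  "supnorm_int k = Max ((\<lambda>m. \<bar>k $ m\<bar>) ` UNIV)"

definition periodic_theta :: "(real^'n \<Rightarrow> 'a) \<Rightarrow> bool" where
  "periodic_theta g \<longleftrightarrow> (\<forall>\<theta> i. g (\<theta> + axis i 1) = g \<theta>)"

definition real_entire_ham :: "(real^'n \<Rightarrow> real^'n \<Rightarrow> real) \<Rightarrow> bool" where
  "real_entire_ham H \<longleftrightarrow> (\<forall>r. periodic_theta (\<lambda>\<theta>. H \<theta> r)) \<and>
     (\<exists>F. entire2 F \<and> (\<forall>z w i. F (z + axis i 1) w = F z w) \<and>
          (\<forall>\<theta> r. F (cvec \<theta>) (cvec r) = complex_of_real (H \<theta> r)))"

definition real_analytic_vec :: "(real^'n \<Rightarrow> real) \<Rightarrow> bool" where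
  "real_analytic_vec g \<longleftrightarrow> (\<exists>U G. open U \<and> (\<forall>\<theta>. cvec \<theta> \<in> U) \<and> holo_on_vec G U \<and>
      (\<forall>\<theta>. G (cvec \<theta>) = complex_of_real (g \<theta>)))"

definition grad :: "(real^'n \<Rightarrow> real) \<Rightarrow> real^'n \<Rightarrow> real^'n" where
  "grad g x = (\<chi> i. deriv (\<lambda>s. g (x + s *\<^sub>R axis i 1)) 0)"

definition grad_r :: "(real^'n \<Rightarrow> real^'n \<Rightarrow> real) \<Rightarrow> real^'n \<Rightarrow> real^'n \<Rightarrow> real^'n" where
  "grad_r H \<theta> r = grad (\<lambda>r'. H \<theta> r') r"

definition grad_theta :: "(real^'n \<Rightarrow> real^'n \<Rightarrow> real) \<Rightarrow> real^'n \<Rightarrow> real^'n \<Rightarrow> real^'n" where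
  "grad_theta H \<theta> r = grad (\<lambda>\<theta>'. H \<theta>' r) \<theta>"

(* forward Hamiltonian trajectory for d theta /\ d r:
   theta' = dH/dr,  r' = - dH/dtheta *)
definition ham_traj :: "(real^'n \<Rightarrow> real^'n \<Rightarrow> real) \<Rightarrow> (real^'n) \<times> (real^'n)
    \<Rightarrow> (real \<Rightarrow> (real^'n) \<times> (real^'n)) \<Rightarrow> bool" where
  "ham_traj H p x \<longleftrightarrow> x 0 = p \<and>
     (\<forall>t\<ge>0. (x has_vector_derivative
        (grad_r H (fst (x t)) (snd (x t)), - grad_theta H (fst (x t)) (snd (x t))))
        (at t within {0..}))"

definition monom :: "('n::finite \<Rightarrow> nat) \<Rightarrow> real^'n \<Rightarrow> real" where
  "monom \<alpha> r = (\<Prod>i\<in>UNIV. (r $ i) ^ \<alpha> i)"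

definition mdeg :: "('n::finite \<Rightarrow> nat) \<Rightarrow> nat" where
  "mdeg \<alpha> = (\<Sum>i\<in>UNIV. \<alpha> i)"

definition dtheta_trunc :: "(('n::finite \<Rightarrow> nat) \<Rightarrow> real^'n \<Rightarrow> real) \<Rightarrow> nat
    \<Rightarrow> real^'n \<Rightarrow> real^'n \<Rightarrow> real^'n" where
  "dtheta_trunc a n \<theta> r = (\<Sum>\<alpha>\<in>{\<alpha>. mdeg \<alpha> \<le> n}. monom \<alpha> r *\<^sub>R grad (a \<alpha>) \<theta>)"

(* N is the Birkhoff normal form of H at T^d x {0}: there is a formal series
   f = \<Sum> a_\<alpha>(theta) r^\<alpha> = O(r^2), coefficients real analytic and periodic,
   with H(theta, r + d_theta f(theta,r)) = N(r) as formal power series in r,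
   expressed via truncations: agreement up to order n for every n. *)
definition is_BNF :: "(real^'n \<Rightarrow> real^'n \<Rightarrow> real) \<Rightarrow> (real^'n \<Rightarrow> real) \<Rightarrow> bool" where
  "is_BNF H N \<longleftrightarrow> (\<exists>a :: ('n \<Rightarrow> nat) \<Rightarrow> real^'n \<Rightarrow> real.
     (\<forall>\<alpha>. real_analytic_vec (a \<alpha>) \<and> periodic_theta (a \<alpha>)) \<and>
     (\<forall>\<alpha>. mdeg \<alpha> \<le> 1 \<longrightarrow> a \<alpha> = (\<lambda>_. 0)) \<and>
     (\<forall>n \<theta>. \<exists>C \<delta>. \<delta> > 0 \<and> (\<forall>r. norm r < \<delta> \<longrightarrow>
        \<bar>H \<theta> (r + dtheta_trunc a n \<theta> r) - N r\<bar> \<le> C * norm r ^ (n + 1))))"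

end

theory Submission
  imports Defs
begin

(* The Hamiltonian is
     H(theta, r) = <omega, r> + sum_j c_j r_l^(j+2) sin (2 pi <k_j, theta>),
   where the k_j form a sparse subsequence of kbar, so k_j $ l = 0, and c_j = |<k_j, omega>|^(1/2).
   Each c_j is taken so small compared with |k_j| and with c_(j-1) that the series is entire.
   As H does not depend on theta_l, the action r_l = s is conserved, the other angles rotate
   linearly, and every phase <k_j, theta> rotates with the tiny frequency lambda_j = <k_j, omega>.
   The flow is therefore explicit:
     r_i(t) = r_i(0) - sum_j c_j s^(j+2) k_(j,i) (sin (phi_j + 2 pi lambda_j t) - sin phi_j) / lambda_j.
   For a suitable t <= T + 1/|lambda_m| the m-th term has size about |s|^(m+2) |k_m| / c_m, which
   beats the earlier terms (of order c_(m-1)^(-2)) and the later ones (small on this time scale),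
   so the actions are unbounded as soon as s <> 0.  Formally, on the other hand, the j-th term of
   H is removed by the generating function c_j / (2 pi lambda_j) cos (2 pi <k_j, theta>) r_l^(j+2),
   whose theta-gradient has no l-component; hence the Birkhoff normal form is <omega, r>. *)

definition int_inner :: "int^'n \<Rightarrow> 'a::comm_ring_1^'n \<Rightarrow> 'a" where
  "int_inner \<kappa> x = (\<Sum>i\<in>UNIV. of_int (\<kappa> $ i) * x $ i)"

definition sup_norm :: "int^'n \<Rightarrow> real" where
  "sup_norm \<kappa> = real_of_int (supnorm_int \<kappa>)"

lemma abs_le_sup_norm: "real_of_int \<bar>\<kappa> $ i\<bar> \<le> sup_norm \<kappa>"
proof -
  have "\<bar>\<kappa> $ i\<bar> \<le> Max ((\<lambda>m. \<bar>\<kappa> $ m\<bar>) ` UNIV)" by (rule Max_ge) auto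
  then show ?thesis unfolding sup_norm_def supnorm_int_def by linarith
qed

lemma sup_norm_nonneg: "0 \<le> sup_norm \<kappa>"
  using abs_le_sup_norm[of \<kappa> undefined] by linarith

lemma sup_norm_attained: "\<exists>i. real_of_int \<bar>\<kappa> $ i\<bar> = sup_norm \<kappa>"
proof -
  have "Max ((\<lambda>m. \<bar>\<kappa> $ m\<bar>) ` UNIV) \<in> (\<lambda>m. \<bar>\<kappa> $ m\<bar>) ` UNIV" by (rule Max_in) auto
  then obtain i where "Max ((\<lambda>m. \<bar>\<kappa> $ m\<bar>) ` UNIV) = \<bar>\<kappa> $ i\<bar>" by (auto simp del: Max_in)
  then show ?thesis unfolding sup_norm_def supnorm_int_def by (intro exI[of _ i]) simp
qed

lemma int_inner_add_axis: "int_inner \<kappa> (x + axis i a) = int_inner \<kappa> x + of_int (\<kappa> $ i) * a"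
proof -
  have "(\<Sum>m\<in>UNIV. of_int (\<kappa> $ m) * axis i a $ m) = of_int (\<kappa> $ i) * a"
    by (simp add: axis_def if_distrib sum.delta cong: if_cong)
  then show ?thesis unfolding int_inner_def by (simp add: distrib_left sum.distrib)
qed

lemma int_inner_cmul: "int_inner \<kappa> (cmul a z) = a * int_inner \<kappa> z"
  unfolding int_inner_def cmul_def by (simp add: sum_distrib_left algebra_simps)

lemma cvec_nth [simp]: "cvec x $ i = of_real (x $ i)"
  unfolding cvec_def by simp

lemma cmul_nth: "cmul a z $ i = a * z $ i"
  unfolding cmul_def by simp

lemma int_inner_cvec: "int_inner \<kappa> (cvec x) = of_real (int_inner \<kappa> x)"
  unfolding int_inner_def by simp

lemma bounded_linear_int_inner: "bounded_linear (int_inner \<kappa> :: complex^'n \<Rightarrow> complex)"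
  unfolding int_inner_def
  by (intro bounded_linear_sum bounded_linear_compose[OF bounded_linear_mult_right bounded_linear_vec_nth])

lemma norm_int_inner_le: "norm (int_inner \<kappa> z) \<le> real CARD('n) * sup_norm \<kappa> * norm (z :: complex^'n)"
proof -
  have "norm (of_int (\<kappa> $ i) * z $ i) \<le> sup_norm \<kappa> * norm z" for i
    unfolding norm_mult norm_of_int using abs_le_sup_norm[of \<kappa> i] sup_norm_nonneg[of \<kappa>]
    by (intro mult_mono Finite_Cartesian_Product.norm_nth_le) auto
  then have "norm (int_inner \<kappa> z) \<le> (\<Sum>i\<in>(UNIV::'n set). sup_norm \<kappa> * norm z)"
    unfolding int_inner_def by (intro order_trans[OF norm_sum] sum_mono)
  then show ?thesis by simp
qed

lemma int_inner_eq_off_coord: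
  fixes x y v :: "real^'n"
  assumes "\<kappa> $ l = 0" and "\<And>m. m \<noteq> l \<Longrightarrow> x $ m = y $ m + v $ m * t"
  shows "int_inner \<kappa> x = int_inner \<kappa> y + int_inner \<kappa> v * t"
proof -
  have "of_int (\<kappa> $ m) * x $ m = of_int (\<kappa> $ m) * y $ m + of_int (\<kappa> $ m) * v $ m * t" for m
    using assms by (cases "m = l") (simp_all add: algebra_simps)
  then show ?thesis unfolding int_inner_def by (simp add: sum.distrib sum_distrib_right)
qed

lemma norm_fst_le_norm: "norm (fst q) \<le> norm q"
  using norm_fst_le[of "fst q" "snd q"] by simp

lemma norm_snd_le_norm: "norm (snd q) \<le> norm q"
  using norm_snd_le[of "snd q" "fst q"] by simp

lemma norm_sin_le_exp: "norm (sin z) \<le> exp (norm z)" for z :: complex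
proof -
  have "norm (exp (\<i> * z)) \<le> exp (norm z)" "norm (exp (-(\<i> * z))) \<le> exp (norm z)"
    using abs_Im_le_cmod[of z] by simp_all
  then have "norm (exp (\<i> * z) - exp (-(\<i> * z))) \<le> 2 * exp (norm z)"
    using norm_triangle_ineq4[of "exp (\<i> * z)" "exp (-(\<i> * z))"] by linarith
  then show ?thesis by (simp add: sin_exp_eq norm_divide norm_mult)
qed

lemma abs_sin_diff_le: "\<bar>sin x - sin y\<bar> \<le> \<bar>x - y\<bar>" for x y :: real
proof -
  have "\<bar>sin x - sin y\<bar> = 2 * \<bar>sin ((x - y) / 2)\<bar> * \<bar>cos ((x + y) / 2)\<bar>"
    by (simp add: sin_diff_sin abs_mult)
  also have "\<dots> \<le> 2 * \<bar>(x - y) / 2\<bar> * 1"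
    by (intro mult_mono abs_sin_x_le_abs_x) auto
  finally show ?thesis by simp
qed

lemma abs_cos_diff_le: "\<bar>cos x - cos y\<bar> \<le> \<bar>x - y\<bar>" for x y :: real
proof -
  have "\<bar>cos x - cos y\<bar> = 2 * \<bar>sin ((x + y) / 2)\<bar> * \<bar>sin ((y - x) / 2)\<bar>"
    by (simp add: cos_diff_cos abs_mult)
  also have "\<dots> \<le> 2 * 1 * \<bar>(y - x) / 2\<bar>"
    by (intro mult_mono abs_sin_x_le_abs_x) auto
  finally show ?thesis by simp
qed

lemma exists_sin_increment_ge_1:
  fixes w a T :: real
  assumes "w \<noteq> 0"
  shows "\<exists>t. T \<le> t \<and> t \<le> T + 1 / \<bar>w\<bar> \<and> 1 \<le> \<bar>sin (a + 2 * pi * w * t) - sin a\<bar>"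
proof -
  have pos: "\<exists>t. T \<le> t \<and> t \<le> T + 1 / w \<and> 1 \<le> \<bar>sin (a + 2 * pi * w * t) - sin a\<bar>"
    if w: "0 < w" for w a
  proof -
    define x where "x = (if sin a \<le> 0 then pi / 2 else - (pi / 2))"
    define n where "n = \<lceil>(a + 2 * pi * w * T - x) / (2 * pi)\<rceil>"
    define t where "t = (x + 2 * pi * n - a) / (2 * pi * w)"
    have n: "(a + 2 * pi * w * T - x) / (2 * pi) \<le> n" "n < (a + 2 * pi * w * T - x) / (2 * pi) + 1"
      unfolding n_def by linarith+
    have "a + 2 * pi * w * t = x + 2 * pi * n" using w by (simp add: t_def field_simps)
    then have "sin (a + 2 * pi * w * t) = sin x" by (simp add: sin_add)
    moreover have "T \<le> t" "t \<le> T + 1 / w"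
    proof -
      define D where "D = x + 2 * pi * n - (a + 2 * pi * w * T)"
      have "0 \<le> D" "D \<le> 2 * pi"
        using n pi_gt_zero unfolding D_def by (simp_all add: field_simps)
      moreover have "t - T = D / (2 * pi * w)" using w by (simp add: t_def D_def field_simps)
      moreover have "D / (2 * pi * w) \<le> 2 * pi / (2 * pi * w)"
        using \<open>D \<le> 2 * pi\<close> w by (intro divide_right_mono) auto
      moreover have "0 \<le> D / (2 * pi * w)" using \<open>0 \<le> D\<close> w by simp
      moreover have "2 * pi / (2 * pi * w) = 1 / w" by simp
      ultimately show "T \<le> t" "t \<le> T + 1 / w" by linarith+
    qed
    ultimately show ?thesis by (intro exI[of _ t]) (auto simp: x_def)
  qed
  show ?thesis
  proof (cases "0 < w")
    case True
    then show ?thesis using pos[of w a] by simp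
  next
    case False
    then obtain t where t: "T \<le> t" "t \<le> T + 1 / (- w)"
      and jump: "1 \<le> \<bar>sin (- a + 2 * pi * (- w) * t) - sin (- a)\<bar>"
      using pos[of "- w" "- a"] assms by auto
    have "- a + 2 * pi * (- w) * t = - (a + 2 * pi * w * t)" by simp
    then have "1 \<le> \<bar>sin (a + 2 * pi * w * t) - sin a\<bar>"
      using jump by (simp only: sin_minus abs_minus_commute minus_diff_minus)
    then show ?thesis using t False by (intro exI[of _ t]) simp
  qed
qed

lemma uniform_tail_le_if_bounded:
  fixes f' :: "nat \<Rightarrow> 'x \<Rightarrow> 'h::real_normed_vector \<Rightarrow> 'b::banach"
  assumes bound: "\<And>n x h. x \<in> S \<Longrightarrow> norm (f' n x h) \<le> M n * norm h"
    and M: "\<And>n. 0 \<le> M n" "summable M" and e: "0 < e"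
  shows "\<forall>\<^sub>F n in sequentially. \<forall>x\<in>S. \<forall>h. norm ((\<Sum>i<n. f' i x h) - (\<Sum>i. f' i x h)) \<le> e * norm h"
proof -
  obtain N where N: "\<And>n. N \<le> n \<Longrightarrow> norm (\<Sum>i. M (i + n)) < e"
    using suminf_exist_split[OF e M(2)] by blast
  show ?thesis unfolding eventually_sequentially
  proof (intro exI allI impI ballI)
    fix n x h assume n: "N \<le> n" and x: "x \<in> S"
    have sMn: "summable (\<lambda>i. M (i + n))" using M(2) by (rule summable_ignore_initial_segment)
    have sf: "summable (\<lambda>i. f' i x h)"
      by (rule summable_comparison_test[OF _ summable_mult2[OF M(2)]]) (use bound x in auto)
    have "norm ((\<Sum>i<n. f' i x h) - (\<Sum>i. f' i x h)) = norm (\<Sum>i. f' (i + n) x h)"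
      using suminf_split_initial_segment[OF sf, of n] by (simp add: norm_minus_commute)
    also have "\<dots> \<le> (\<Sum>i. M (i + n) * norm h)"
      by (rule norm_suminf_le) (use bound x summable_mult2[OF sMn] in auto)
    also have "\<dots> = (\<Sum>i. M (i + n)) * norm h" using suminf_mult2[OF sMn] by simp
    also have "\<dots> \<le> e * norm h"
      using N[OF n] suminf_nonneg[OF sMn] M(1) by (intro mult_right_mono) auto
    finally show "norm ((\<Sum>i<n. f' i x h) - (\<Sum>i. f' i x h)) \<le> e * norm h" .
  qed
qed

lemma has_derivative_suminf_bounded:
  fixes f :: "nat \<Rightarrow> 'a::real_normed_vector \<Rightarrow> 'b::banach"
  assumes deriv: "\<And>n x. (f n has_derivative f' n x) (at x)"
    and bound: "\<And>n x h. norm x < R \<Longrightarrow> norm (f' n x h) \<le> M n * norm h"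
    and M: "\<And>n. 0 \<le> M n" "summable M"
    and "summable (\<lambda>n. f n 0)" and p: "norm p < R"
  shows "((\<lambda>x. \<Sum>n. f n x) has_derivative (\<lambda>h. \<Sum>n. f' n p h)) (at p)"
proof -
  have deriv_within: "(f n has_derivative f' n x) (at x within ball 0 R)" for n x
    using deriv by (rule has_derivative_at_withinI)
  have uniform: "\<forall>\<^sub>F n in sequentially. \<forall>x\<in>ball 0 R. \<forall>h.
      norm ((\<Sum>i<n. f' i x h) - (\<Sum>i. f' i x h)) \<le> e * norm h" if "0 < e" for e
    using bound M that by (intro uniform_tail_le_if_bounded) auto
  have "0 < R" using p norm_ge_zero[of p] by linarith
  then have "0 \<in> ball 0 R" by simp
  from has_derivative_series[OF convex_ball deriv_within uniform this summable_sums[OF assms(5)]]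
  obtain g where g: "\<And>x. x \<in> ball 0 R \<Longrightarrow>
      (\<lambda>n. f n x) sums g x \<and> (g has_derivative (\<lambda>h. \<Sum>i. f' i x h)) (at x within ball 0 R)"
    by blast
  have p_in: "p \<in> ball 0 R" using p by simp
  have "(g has_derivative (\<lambda>h. \<Sum>i. f' i p h)) (at p)"
    using g[OF p_in] at_within_open[OF p_in open_ball] by simp
  then show ?thesis
    by (rule has_derivative_transform_within_open[OF _ open_ball p_in]) (use g sums_unique in metis)
qed

lemma has_field_derivative_suminf_bounded:
  fixes f f' :: "nat \<Rightarrow> real \<Rightarrow> real"
  assumes "\<And>n t. (f n has_field_derivative f' n t) (at t)"
    and "\<And>n t. \<bar>t - x\<bar> \<le> 1 \<Longrightarrow> \<bar>f' n t\<bar> \<le> M n" and "summable M" and "summable (\<lambda>n. f n x)"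
  shows "((\<lambda>t. \<Sum>n. f n t) has_field_derivative (\<Sum>n. f' n x)) (at x)"
proof (rule has_field_derivative_series'(2)[of "cball x 1" f f' x x])
  show "uniformly_convergent_on (cball x 1) (\<lambda>n t. \<Sum>i<n. f' i t)"
    by (rule Weierstrass_m_test'_ev[OF always_eventually \<open>summable M\<close>])
       (use assms(2) in \<open>auto simp: dist_real_def abs_minus_commute\<close>)
qed (use assms in \<open>auto intro: has_field_derivative_at_within\<close>)

lemma has_vector_derivative_componentwise:
  fixes x :: "real \<Rightarrow> real^'n"
  assumes "\<And>m. ((\<lambda>t. x t $ m) has_vector_derivative v $ m) (at t within S)"
  shows "(x has_vector_derivative v) (at t within S)"
proof -
  have expand: "y = (\<Sum>m\<in>UNIV. y $ m *\<^sub>R axis m 1)" for y :: "real^'n"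
    by (subst vec_eq_iff) (simp add: axis_def if_distrib sum.delta cong: if_cong)
  have "((\<lambda>t. \<Sum>m\<in>UNIV. x t $ m *\<^sub>R axis m (1::real)) has_vector_derivative
      (\<Sum>m\<in>UNIV. x t $ m *\<^sub>R 0 + v $ m *\<^sub>R axis m 1)) (at t within S)"
    using assms unfolding has_real_derivative_iff_has_vector_derivative[symmetric]
    by (intro has_vector_derivative_sum has_vector_derivative_scaleR has_vector_derivative_const)
  then show ?thesis by (simp flip: expand)
qed

lemma has_vector_derivative_fst_nth:
  "(x has_vector_derivative v) F \<Longrightarrow> ((\<lambda>t. fst (x t) $ m) has_vector_derivative fst v $ m) F"
  using bounded_linear.has_vector_derivative[OF
      bounded_linear_compose[OF bounded_linear_vec_nth bounded_linear_fst], of x v F m] by simp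

lemma has_vector_derivative_snd_nth:
  "(x has_vector_derivative v) F \<Longrightarrow> ((\<lambda>t. snd (x t) $ m) has_vector_derivative snd v $ m) F"
  using bounded_linear.has_vector_derivative[OF
      bounded_linear_compose[OF bounded_linear_vec_nth bounded_linear_snd], of x v F m] by simp

lemma zero_derivative_nonneg_imp_eq:
  fixes f :: "real \<Rightarrow> real"
  assumes "\<And>t. 0 \<le> t \<Longrightarrow> (f has_real_derivative 0) (at t within {0..})" and "0 \<le> t"
  shows "f t = f 0"
proof -
  obtain C where "\<forall>x\<in>{0..}. f x = C"
    using has_field_derivative_zero_constant[of "{0..}" f] assms(1) by auto
  then show ?thesis using assms(2) by auto
qed

lemma sin_add_2pi_int: "sin (z + of_real (2 * pi) * of_int n) = (sin z :: 'a::{real_normed_field,banach})"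
proof -
  have "of_real (2 * pi) * of_int n = (of_real (2 * pi * of_int n) :: 'a)" by simp
  then show ?thesis by (simp only: sin_add cos_of_real sin_of_real) simp
qed

lemma has_derivative_sin_comp:
  fixes f :: "'a::real_normed_vector \<Rightarrow> 'b::{real_normed_field,banach}"
  assumes "(f has_derivative f') (at x within S)"
  shows "((\<lambda>x. sin (f x)) has_derivative (\<lambda>h. f' h * cos (f x))) (at x within S)"
  using has_derivative_compose[OF assms DERIV_sin[of "f x", unfolded has_field_derivative_def]]
  by (simp add: mult.commute)

lemma has_derivative_cos_comp:
  fixes f :: "'a::real_normed_vector \<Rightarrow> 'b::{real_normed_field,banach}"
  assumes "(f has_derivative f') (at x within S)"
  shows "((\<lambda>x. cos (f x)) has_derivative (\<lambda>h. f' h * - sin (f x))) (at x within S)"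
  using has_derivative_compose[OF assms DERIV_cos[of "f x", unfolded has_field_derivative_def]]
  by (simp add: mult.commute)

lemma finite_mdeg_le: "finite {\<alpha> :: 'n::finite \<Rightarrow> nat. mdeg \<alpha> \<le> n}"
proof (rule finite_subset)
  show "{\<alpha> :: 'n \<Rightarrow> nat. mdeg \<alpha> \<le> n} \<subseteq> PiE UNIV (\<lambda>_. {..n})"
  proof
    fix \<alpha> :: "'n \<Rightarrow> nat" assume "\<alpha> \<in> {\<alpha>. mdeg \<alpha> \<le> n}"
    then have "\<alpha> m \<le> n" for m
      unfolding mdeg_def using member_le_sum[of m UNIV \<alpha>] by auto
    then show "\<alpha> \<in> PiE UNIV (\<lambda>_. {..n})" by auto
  qed
qed (intro finite_PiE, auto)

lemma grad_const_zero: "grad (\<lambda>_. 0) \<theta> = 0"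
  unfolding grad_def by (simp add: vec_eq_iff)

lemma real_analytic_const_zero: "real_analytic_vec (\<lambda>_. 0)"
  unfolding real_analytic_vec_def holo_on_vec_def
  by (rule exI[of _ UNIV], rule exI[of _ "\<lambda>_. 0"]) (auto intro!: exI[of _ "\<lambda>_. 0"])

lemma exists_nat_exp_ge: "\<exists>m::nat. a \<le> exp (real m) \<and> C \<le> real m"
proof -
  obtain m :: nat where m: "max (ln (max a 1)) C \<le> real m" using real_arch_simple by blast
  have "a \<le> exp (ln (max a 1))" by simp
  also have "\<dots> \<le> exp (real m)" using m by (simp only: exp_le_cancel_iff max.bounded_iff)
  finally have "a \<le> exp (real m)" .
  with m show ?thesis by auto
qed

lemma power_bounds_of_double_le:
  fixes Q y :: real
  assumes "1 \<le> Q" "2 * Q \<le> y"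
  shows "2 * Q ^ (m + 1) \<le> y ^ (m + 2)" and "real m < y ^ (m + 2)"
proof -
  have "2 * Q ^ (m + 1) \<le> 2 ^ (m + 1) * Q ^ (m + 1) * (2 * Q)"
    using assms(1) mult_mono[of 2 "2 ^ (m + 1)" 1 "2 * Q"]
      mult_left_mono[of 1 "2 ^ (m + 1)" "Q ^ (m + 1)"] one_le_power[of 2 "m + 1"]
    by (simp add: mult_ac)
  also have "\<dots> = (2 * Q) ^ (m + 2)" by (simp add: power_mult_distrib)
  also have "\<dots> \<le> y ^ (m + 2)" using assms by (intro power_mono) auto
  finally show "2 * Q ^ (m + 1) \<le> y ^ (m + 2)" .
  have "real m < 2 ^ m" using less_exp[of m] by (metis of_nat_less_iff of_nat_numeral of_nat_power)
  also have "(2::real) ^ m \<le> (2 * Q) ^ (m + 2)"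
    using assms(1) power_increasing[of m "m + 2" "2::real"] power_mono[of 2 "2 * Q" "m + 2"] by simp
  also have "\<dots> \<le> y ^ (m + 2)" using assms by (intro power_mono) auto
  finally show "real m < y ^ (m + 2)" .
qed

section \<open>Admissible frequency vectors\<close>

definition prev_sq :: "(nat \<Rightarrow> real) \<Rightarrow> nat \<Rightarrow> real" where
  "prev_sq c j = (if j = 0 then 1 else c (j - 1) ^ 2)"

lemma recursive_choice_prev_sq:
  assumes ex: "\<And>m p. 0 < p \<Longrightarrow> \<exists>x. P m p x" and pos: "\<And>m p x. P m p x \<Longrightarrow> 0 < g x"
  shows "\<exists>X. \<forall>j. P j (prev_sq (\<lambda>i. g (X i)) j) (X j)"
proof -
  define X where "X = rec_nat (SOME x. P 0 1 x) (\<lambda>n x. SOME y. P (Suc n) (g x ^ 2) y)"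
  have "P j (prev_sq (\<lambda>i. g (X i)) j) (X j)" for j
  proof (induction j)
    case 0
    show ?case using someI_ex[OF ex[of 1 0]] by (simp add: X_def prev_sq_def)
  next
    case (Suc j)
    have "0 < g (X j) ^ 2" using pos[OF Suc.IH] by simp
    from someI_ex[OF ex[OF this, of "Suc j"]] show ?case by (simp add: X_def prev_sq_def)
  qed
  then show ?thesis by blast
qed

(* Read with N = |k_m|, a = c_m and p = c_(m-1)^2: the first bound makes the Hamiltonian entire,
   the other two let the m-th term of the action drift dominate the earlier and the later ones. *)
definition admissible :: "real \<Rightarrow> real \<Rightarrow> nat \<Rightarrow> real \<Rightarrow> bool" where
  "admissible N a m p \<longleftrightarrow> 1 \<le> N \<and> 0 < a \<and>
     a \<le> exp (- (real m + 1) * (N + real m + 1)) \<and>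
     a * N \<le> p * exp (- (real m * (real m + 2))) \<and>
     a * exp (real m * (real m + 2)) * (1 + real m / p) \<le> 1"

locale sine_series_ham =
  fixes \<omega> :: "real^'n" and l :: 'n and k :: "nat \<Rightarrow> int^'n" and c :: "nat \<Rightarrow> real"
  assumes k_l: "k j $ l = 0"
    and abs_int_inner: "\<bar>int_inner (k j) \<omega>\<bar> = c j ^ 2"
    and admissible: "admissible (sup_norm (k j)) (c j) j (prev_sq c j)"
begin

lemma sup_norm_ge_1: "1 \<le> sup_norm (k j)"
  and c_pos: "0 < c j"
  and c_le_exp: "c j \<le> exp (- (real j + 1) * (sup_norm (k j) + real j + 1))"
  and c_sup_norm_le: "c j * sup_norm (k j) \<le> prev_sq c j * exp (- (real j * (real j + 2)))"
  and c_exp_le_1: "c j * exp (real j * (real j + 2)) * (1 + real j / prev_sq c j) \<le> 1"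
  using admissible[of j] unfolding admissible_def by auto

definition freq :: "nat \<Rightarrow> real" where
  "freq j = int_inner (k j) \<omega>"

definition phase :: "nat \<Rightarrow> 'a::real_field^'n \<Rightarrow> 'a" where
  "phase j x = of_real (2 * pi) * int_inner (k j) x"

definition ham :: "real^'n \<Rightarrow> real^'n \<Rightarrow> real" where
  "ham \<theta> r = \<omega> \<bullet> r + (\<Sum>j. c j * (r $ l) ^ (j + 2) * sin (phase j \<theta>))"

definition majorant :: "real \<Rightarrow> nat \<Rightarrow> real" where
  "majorant \<rho> j = c j * (real j + 3) * \<rho> ^ j * sup_norm (k j)"

lemma abs_freq: "\<bar>freq j\<bar> = c j ^ 2"
  unfolding freq_def by (rule abs_int_inner)

lemma freq_nonzero: "freq j \<noteq> 0"
  using abs_freq[of j] c_pos[of j] by auto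

lemma summable_exp_weighted:
  assumes "0 \<le> \<rho>" "0 \<le> A"
  shows "summable (\<lambda>j. c j * (real j + 3) * \<rho> ^ j * exp (A * sup_norm (k j)))"
proof -
  obtain N :: nat where N: "A \<le> real N" "\<rho> + 2 \<le> real N"
    by (metis max.bounded_iff real_arch_simple)
  show ?thesis
  proof (rule summable_comparison_test'[OF summable_geometric[of "1/2"], where N=N])
    fix j assume "N \<le> j"
    then have jA: "A \<le> real j" and jr: "\<rho> + 2 \<le> real j" using N by auto
    define S where "S = sup_norm (k j)"
    have "c j * (real j + 3) * \<rho> ^ j * exp (A * S)
        \<le> exp (- (real j + 1) * (S + real j + 1)) * exp (real j + 2) * exp \<rho> ^ j * exp (A * S)"
      using c_le_exp[of j] c_pos[of j] assms exp_ge_add_one_self[of "real j + 2"]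
        power_mono[of \<rho> "exp \<rho>" j] exp_ge_add_one_self[of \<rho>] unfolding S_def
      by (intro mult_right_mono mult_mono) auto
    also have "\<dots> = exp (- (real j + 1) * (S + real j + 1) + (real j + 2) + \<rho> * real j + A * S)"
      by (simp add: exp_add exp_of_nat_mult[symmetric] mult.commute)
    also have "\<dots> \<le> exp (- real j)"
    proof -
      have "A * S \<le> (real j + 1) * S"
        using jA sup_norm_ge_1[of j] unfolding S_def by (intro mult_right_mono) auto
      moreover have "(\<rho> + 2) * real j \<le> real j * real j" using jr by (intro mult_right_mono) auto
      moreover have "1 \<le> real j" using jr assms by simp
      ultimately show ?thesis by (simp add: algebra_simps)
    qed
    also have "\<dots> = exp (-1) ^ j" by (simp add: exp_of_nat_mult[symmetric])
    also have "\<dots> \<le> (1/2) ^ j"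
      using exp_ge_add_one_self[of "1::real"] by (intro power_mono) (auto simp: exp_minus field_simps)
    finally show "norm (c j * (real j + 3) * \<rho> ^ j * exp (A * S)) \<le> (1/2) ^ j"
      using c_pos[of j] assms by simp
  qed simp
qed

lemma summable_majorant:
  assumes "0 \<le> \<rho>"
  shows "summable (majorant \<rho>)"
proof (rule summable_comparison_test[OF _ summable_exp_weighted[OF assms zero_le_one]])
  have "sup_norm (k j) \<le> exp (sup_norm (k j))" for j
    using exp_ge_add_one_self[of "sup_norm (k j)"] by linarith
  then have "norm (majorant \<rho> j) \<le> c j * (real j + 3) * \<rho> ^ j * exp (1 * sup_norm (k j))" for j
    unfolding majorant_def using c_pos[of j] sup_norm_ge_1[of j] assms
    by (simp add: abs_mult) (intro mult_left_mono, auto)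
  then show "\<exists>N. \<forall>j\<ge>N. norm (majorant \<rho> j) \<le> c j * (real j + 3) * \<rho> ^ j * exp (1 * sup_norm (k j))"
    by blast
qed

lemma summable_if_le_majorant:
  assumes "0 \<le> \<rho>" and "\<And>j. \<bar>f j\<bar> \<le> C * majorant \<rho> j"
  shows "summable (f :: nat \<Rightarrow> real)"
  by (rule summable_comparison_test[OF _ summable_mult[OF summable_majorant[OF assms(1)], of C]])
     (use assms(2) in auto)

lemma add_two_le_weight: "real j + 2 \<le> (real j + 3) * sup_norm (k j)"
proof -
  have "real j + 3 \<le> (real j + 3) * sup_norm (k j)" using sup_norm_ge_1[of j] by simp
  then show ?thesis by linarith
qed

lemma c_weight_pow_le_majorant:
  assumes "0 \<le> \<rho>"
  shows "c j * (real j + 2) * \<rho> ^ j \<le> majorant \<rho> j"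
proof -
  have "c j * (real j + 2) * \<rho> ^ j \<le> c j * ((real j + 3) * sup_norm (k j)) * \<rho> ^ j"
    using add_two_le_weight[of j] c_pos[of j] assms by (intro mult_right_mono mult_left_mono) auto
  then show ?thesis unfolding majorant_def by (simp add: ac_simps)
qed

lemma c_pow_le_majorant:
  assumes "0 \<le> \<rho>"
  shows "c j * \<rho> ^ j \<le> majorant \<rho> j"
proof -
  have "c j * \<rho> ^ j * 1 \<le> c j * \<rho> ^ j * (real j + 2)"
    using c_pos[of j] assms by (intro mult_left_mono) auto
  then show ?thesis using c_weight_pow_le_majorant[OF assms, of j] by (simp add: ac_simps)
qed

lemma c_pow_sup_norm_le_majorant: "0 \<le> \<rho> \<Longrightarrow> c j * \<rho> ^ j * sup_norm (k j) \<le> majorant \<rho> j"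
  unfolding majorant_def using c_pos[of j] sup_norm_ge_1[of j]
  by (intro mult_right_mono mult_left_mono) auto

lemma c_pow2_sup_norm_le_majorant:
  "c j * \<bar>s\<bar> ^ (j + 2) * sup_norm (k j) \<le> s\<^sup>2 * majorant \<bar>s\<bar> j"
proof -
  have "\<bar>s\<bar> ^ (j + 2) = s\<^sup>2 * \<bar>s\<bar> ^ j" by (simp add: power_add power2_eq_square)
  then have "c j * \<bar>s\<bar> ^ (j + 2) * sup_norm (k j) = s\<^sup>2 * (c j * \<bar>s\<bar> ^ j * sup_norm (k j))"
    by (simp add: ac_simps)
  also have "\<dots> \<le> s\<^sup>2 * majorant \<bar>s\<bar> j"
    by (intro mult_left_mono c_pow_sup_norm_le_majorant) auto
  finally show ?thesis .
qed

lemma abs_ham_term_le: "\<bar>c j * x ^ (j + 2) * sin (phase j \<theta>)\<bar> \<le> c j * \<bar>x\<bar> ^ (j + 2)"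
  using c_pos[of j] abs_sin_le_one[of "phase j \<theta>"]
  by (simp add: abs_mult power_abs mult_left_le)

lemma c_weight_pow_Suc_le_majorant:
  "c j * (real j + 2) * \<bar>s\<bar> ^ (j + 1) \<le> \<bar>s\<bar> * majorant \<bar>s\<bar> j"
  using mult_left_mono[OF c_weight_pow_le_majorant[of "\<bar>s\<bar>" j], of "\<bar>s\<bar>"]
  by (simp add: ac_simps)

lemma ham_series_summable: "summable (\<lambda>j. c j * (r $ l) ^ (j + 2) * sin (phase j \<theta>))"
proof (rule summable_if_le_majorant[of "\<bar>r $ l\<bar>" _ "(r $ l)\<^sup>2"])
  fix j
  have "c j * \<bar>r $ l\<bar> ^ (j + 2) * 1 \<le> c j * \<bar>r $ l\<bar> ^ (j + 2) * sup_norm (k j)"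
    using c_pos[of j] sup_norm_ge_1[of j] by (intro mult_left_mono) auto
  then show "\<bar>c j * (r $ l) ^ (j + 2) * sin (phase j \<theta>)\<bar> \<le> (r $ l)\<^sup>2 * majorant \<bar>r $ l\<bar> j"
    using abs_ham_term_le[of j "r $ l" \<theta>] c_pow2_sup_norm_le_majorant[of j "r $ l"] by simp
qed simp

lemma phase_cvec: "phase j (cvec \<theta>) = of_real (phase j \<theta>)"
  unfolding phase_def by (simp add: int_inner_cvec)

lemma phase_cmul: "phase j (cmul a z) = a * phase j z"
  unfolding phase_def by (simp add: int_inner_cmul)

lemma phase_add_axis: "phase j (x + axis i a) = phase j x + of_real (2 * pi) * of_int (k j $ i) * a"
  unfolding phase_def int_inner_add_axis by (simp add: algebra_simps)

lemma phase_add_scaled_axis: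
  "phase j (\<theta> + s *\<^sub>R axis i 1) = phase j \<theta> + 2 * pi * of_int (k j $ i) * s"
proof -
  have "s *\<^sub>R axis i 1 = axis i s" by (simp add: vec_eq_iff axis_def)
  then show ?thesis by (simp add: phase_add_axis)
qed

lemma norm_phase_le: "norm (phase j (z :: complex^'n)) \<le> 2 * pi * real CARD('n) * sup_norm (k j) * norm z"
  unfolding phase_def norm_mult using norm_int_inner_le[of "k j" z] by simp

section \<open>The entire extension\<close>

definition ham_term_c :: "nat \<Rightarrow> (complex^'n) \<times> (complex^'n) \<Rightarrow> complex" where
  "ham_term_c j q = of_real (c j) * (snd q $ l) ^ (j + 2) * sin (phase j (fst q))"

definition ham_term_c' :: "nat \<Rightarrow> (complex^'n) \<times> (complex^'n) \<Rightarrow> (complex^'n) \<times> (complex^'n) \<Rightarrow> complex"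
  where "ham_term_c' j q h = of_real (c j) *
    (of_nat (j + 2) * (snd q $ l) ^ (j + 1) * (snd h $ l) * sin (phase j (fst q))
      + (snd q $ l) ^ (j + 2) * (phase j (fst h) * cos (phase j (fst q))))"

definition ham_c :: "complex^'n \<Rightarrow> complex^'n \<Rightarrow> complex" where
  "ham_c z w = (\<Sum>i\<in>UNIV. of_real (\<omega> $ i) * w $ i) + (\<Sum>j. ham_term_c j (z, w))"

definition deriv_majorant :: "real \<Rightarrow> nat \<Rightarrow> real" where
  "deriv_majorant R j = (1 + 2 * pi * real CARD('n)) * c j * (real j + 3) * (R + 1) ^ (j + 2)
     * sup_norm (k j) * exp (2 * pi * real CARD('n) * sup_norm (k j) * R)"

lemma has_derivative_ham_term_c: "(ham_term_c j has_derivative ham_term_c' j q) (at q)"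
proof -
  have phase: "((\<lambda>q. phase j (fst q)) has_derivative (\<lambda>h. phase j (fst h))) (at q)"
    unfolding phase_def
    by (intro bounded_linear_imp_has_derivative bounded_linear_compose[OF _ bounded_linear_fst]
        bounded_linear_compose[OF bounded_linear_mult_right bounded_linear_int_inner])
  have coord: "((\<lambda>q. snd q $ l) has_derivative (\<lambda>h. snd h $ l)) (at q)"
    by (intro bounded_linear_imp_has_derivative
        bounded_linear_compose[OF bounded_linear_vec_nth bounded_linear_snd])
  show ?thesis
    unfolding ham_term_c_def ham_term_c'_def
    by (rule has_derivative_eq_rhs,
        (rule has_derivative_mult has_derivative_const has_derivative_sin_comp[OF phase]
          has_derivative_power coord)+)
       (simp add: fun_eq_iff algebra_simps)
qed

lemma norm_sin_cos_phase_le: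
  fixes z :: "complex^'n"
  assumes "norm z \<le> R"
  shows "norm (sin (phase j z)) \<le> exp (2 * pi * real CARD('n) * sup_norm (k j) * R)"
    and "norm (cos (phase j z)) \<le> exp (2 * pi * real CARD('n) * sup_norm (k j) * R)"
proof -
  have "norm (phase j z) \<le> 2 * pi * real CARD('n) * sup_norm (k j) * norm z" by (rule norm_phase_le)
  also have "\<dots> \<le> 2 * pi * real CARD('n) * sup_norm (k j) * R"
    using assms sup_norm_nonneg[of "k j"] by (intro mult_left_mono) auto
  finally have "exp (norm (phase j z)) \<le> exp (2 * pi * real CARD('n) * sup_norm (k j) * R)" by simp
  then show "norm (sin (phase j z)) \<le> exp (2 * pi * real CARD('n) * sup_norm (k j) * R)"
    and "norm (cos (phase j z)) \<le> exp (2 * pi * real CARD('n) * sup_norm (k j) * R)"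
    using norm_sin_le_exp[of "phase j z"] norm_cos_le[of "phase j z"] by linarith+
qed

lemma norm_ham_term_c'_le:
  assumes R: "norm q \<le> R"
  shows "norm (ham_term_c' j q h) \<le> deriv_majorant R j * norm h"
proof -
  define D where "D = 2 * pi * real CARD('n)"
  define N where "N = sup_norm (k j)"
  define X where "X = exp (D * N * R)"
  define a where "a = snd q $ l"
  define P where "P = (R + 1) ^ (j + 2)"
  have N: "1 \<le> N" "real j + 2 \<le> (real j + 3) * N" and DN: "0 \<le> D * N"
    using sup_norm_ge_1[of j] add_two_le_weight[of j] unfolding N_def D_def by auto
  have "0 \<le> R" "norm (fst q) \<le> R" using R norm_fst_le_norm[of q] norm_ge_zero[of q] by linarith+
  then have sin_q: "norm (sin (phase j (fst q))) \<le> X" and cos_q: "norm (cos (phase j (fst q))) \<le> X"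
    using norm_sin_cos_phase_le unfolding X_def D_def N_def by blast+
  have "norm a \<le> R"
    using Finite_Cartesian_Product.norm_nth_le[of "snd q" l] norm_snd_le_norm[of q] R unfolding a_def
    by linarith
  then have pow_le: "norm a ^ n \<le> P" if "n \<le> j + 2" for n
    unfolding P_def using that \<open>0 \<le> R\<close> by (intro order_trans[OF power_mono power_increasing]) auto
  have P: "0 \<le> P" unfolding P_def using \<open>0 \<le> R\<close> by simp
  have h_l: "norm (snd h $ l) \<le> norm h"
    using Finite_Cartesian_Product.norm_nth_le[of "snd h" l] norm_snd_le_norm[of h] by linarith
  have phase_h: "norm (phase j (fst h)) \<le> D * N * norm h"
    using norm_phase_le[of j "fst h"] mult_left_mono[OF norm_fst_le_norm DN] unfolding D_def N_def
    by (rule order_trans)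
  have first: "norm (of_nat (j + 2) * a ^ (j + 1) * (snd h $ l) * sin (phase j (fst q)))
      \<le> ((real j + 3) * N) * P * norm h * X"
    unfolding norm_mult norm_power norm_of_nat
    using N P pow_le[of "j + 1"] h_l sin_q by (intro mult_mono) auto
  have "norm (a ^ (j + 2) * (phase j (fst h) * cos (phase j (fst q)))) \<le> P * (D * N * norm h * X)"
    unfolding norm_mult norm_power using pow_le[of "j + 2"] phase_h cos_q DN P by (intro mult_mono) auto
  also have "\<dots> \<le> (real j + 3) * (P * (D * N * norm h * X))"
    using mult_right_mono[of 1 "real j + 3" "P * (D * N * norm h * X)"] P DN unfolding X_def by simp
  finally have second: "norm (a ^ (j + 2) * (phase j (fst h) * cos (phase j (fst q))))
      \<le> (real j + 3) * (P * (D * N * norm h * X))" .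
  have "norm (ham_term_c' j q h) = c j * norm (of_nat (j + 2) * a ^ (j + 1) * (snd h $ l)
      * sin (phase j (fst q)) + a ^ (j + 2) * (phase j (fst h) * cos (phase j (fst q))))"
    unfolding ham_term_c'_def a_def[symmetric] norm_mult using c_pos[of j] by simp
  also have "\<dots> \<le> c j * ((real j + 3) * N * P * norm h * X + (real j + 3) * (P * (D * N * norm h * X)))"
    using c_pos[of j] order_trans[OF norm_triangle_ineq add_mono[OF first second]]
    by (intro mult_left_mono) auto
  also have "\<dots> = deriv_majorant R j * norm h"
    unfolding deriv_majorant_def D_def N_def P_def X_def by (simp add: algebra_simps)
  finally show ?thesis .
qed

lemma deriv_majorant_nonneg: "0 \<le> R \<Longrightarrow> 0 \<le> deriv_majorant R j"
  unfolding deriv_majorant_def using c_pos[of j] sup_norm_ge_1[of j] by simp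

lemma summable_deriv_majorant:
  assumes "0 \<le> R"
  shows "summable (deriv_majorant R)"
proof -
  define D where "D = 2 * pi * real CARD('n)"
  have "summable (\<lambda>j. (1 + D) * (R + 1)\<^sup>2 *
      (c j * (real j + 3) * (R + 1) ^ j * exp ((D * R + 1) * sup_norm (k j))))"
    using assms unfolding D_def by (intro summable_mult summable_exp_weighted) auto
  moreover have "norm (deriv_majorant R j) \<le> (1 + D) * (R + 1)\<^sup>2 *
      (c j * (real j + 3) * (R + 1) ^ j * exp ((D * R + 1) * sup_norm (k j)))" for j
  proof -
    have "sup_norm (k j) * exp (D * sup_norm (k j) * R)
        \<le> exp (sup_norm (k j)) * exp (D * sup_norm (k j) * R)"
      using exp_ge_add_one_self[of "sup_norm (k j)"] by (intro mult_right_mono) (linarith, simp)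
    also have "\<dots> = exp ((D * R + 1) * sup_norm (k j))" by (simp add: exp_add[symmetric] algebra_simps)
    finally have *: "sup_norm (k j) * exp (D * sup_norm (k j) * R) \<le> exp ((D * R + 1) * sup_norm (k j))" .
    have "norm (deriv_majorant R j) = (1 + D) * (R + 1)\<^sup>2 *
        (c j * (real j + 3) * (R + 1) ^ j * (sup_norm (k j) * exp (D * sup_norm (k j) * R)))"
      using deriv_majorant_nonneg[OF assms, of j] unfolding deriv_majorant_def D_def
      by (simp add: power_add power2_eq_square ac_simps)
    also have "\<dots> \<le> (1 + D) * (R + 1)\<^sup>2 *
        (c j * (real j + 3) * (R + 1) ^ j * exp ((D * R + 1) * sup_norm (k j)))"
      using * assms c_pos[of j] unfolding D_def by (intro mult_left_mono) auto
    finally show ?thesis .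
  qed
  ultimately show ?thesis by (rule summable_comparison_test'[where N=0])
qed

lemma has_derivative_ham_c:
  "((\<lambda>q. ham_c (fst q) (snd q)) has_derivative
     (\<lambda>h. (\<Sum>i\<in>UNIV. of_real (\<omega> $ i) * snd h $ i) + (\<Sum>j. ham_term_c' j p h))) (at p)"
proof -
  have "((\<lambda>q. \<Sum>j. ham_term_c j q) has_derivative (\<lambda>h. \<Sum>j. ham_term_c' j p h)) (at p)"
  proof (rule has_derivative_suminf_bounded[where f=ham_term_c and f'=ham_term_c'
        and R="norm p + 1" and M="deriv_majorant (norm p + 1)"])
    show "norm (ham_term_c' j x h) \<le> deriv_majorant (norm p + 1) j * norm h"
      if "norm x < norm p + 1" for j x h
      using that by (intro norm_ham_term_c'_le) simp
  qed (simp_all add: has_derivative_ham_term_c deriv_majorant_nonneg summable_deriv_majorant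
      ham_term_c_def)
  moreover have "((\<lambda>q. \<Sum>i\<in>UNIV. of_real (\<omega> $ i) * snd q $ i) has_derivative
      (\<lambda>h. \<Sum>i\<in>UNIV. of_real (\<omega> $ i) * snd h $ i)) (at p)"
    by (intro bounded_linear_imp_has_derivative bounded_linear_sum
        bounded_linear_compose[OF bounded_linear_mult_right]
        bounded_linear_compose[OF bounded_linear_vec_nth bounded_linear_snd])
  ultimately show ?thesis unfolding ham_c_def by (auto intro: has_derivative_add)
qed

lemma summable_ham_term_c': "summable (\<lambda>j. ham_term_c' j p h)"
  by (rule summable_comparison_test[OF _ summable_mult2[OF summable_deriv_majorant[of "norm p"]]])
     (auto intro: norm_ham_term_c'_le)

lemma entire_ham_c: "entire2 ham_c"
  unfolding entire2_def
proof (intro allI exI conjI)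
  fix p
  show "((\<lambda>q. ham_c (fst q) (snd q)) has_derivative
     (\<lambda>h. (\<Sum>i\<in>UNIV. of_real (\<omega> $ i) * snd h $ i) + (\<Sum>j. ham_term_c' j p h))) (at p)"
    by (rule has_derivative_ham_c)
  fix a v w
  have "ham_term_c' j p (cmul a v, cmul a w) = a * ham_term_c' j p (v, w)" for j
    by (simp add: ham_term_c'_def phase_cmul cmul_nth algebra_simps)
  then show "(\<Sum>i\<in>UNIV. of_real (\<omega> $ i) * snd (cmul a v, cmul a w) $ i)
        + (\<Sum>j. ham_term_c' j p (cmul a v, cmul a w))
      = a * ((\<Sum>i\<in>UNIV. of_real (\<omega> $ i) * snd (v, w) $ i) + (\<Sum>j. ham_term_c' j p (v, w)))"
    using suminf_mult[OF summable_ham_term_c'[of p "(v, w)"], of a]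
    by (simp add: cmul_nth sum_distrib_left distrib_left algebra_simps)
qed

lemma ham_c_cvec: "ham_c (cvec \<theta>) (cvec r) = of_real (ham \<theta> r)"
proof -
  have "ham_term_c j (cvec \<theta>, cvec r) = of_real (c j * (r $ l) ^ (j + 2) * sin (phase j \<theta>))" for j
    unfolding ham_term_c_def by (simp add: phase_cvec sin_of_real)
  then have "(\<Sum>j. ham_term_c j (cvec \<theta>, cvec r))
      = (\<Sum>j. of_real (c j * (r $ l) ^ (j + 2) * sin (phase j \<theta>)) :: complex)"
    by (simp only:)
  also have "\<dots> = of_real (\<Sum>j. c j * (r $ l) ^ (j + 2) * sin (phase j \<theta>))"
    by (rule suminf_of_real[symmetric, OF ham_series_summable])
  finally show ?thesis unfolding ham_c_def ham_def by (simp add: inner_vec_def)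
qed

lemma ham_term_c_add_axis: "ham_term_c j (z + axis i 1, w) = ham_term_c j (z, w)"
  unfolding ham_term_c_def fst_conv snd_conv phase_add_axis mult_1_right sin_add_2pi_int ..

lemma real_entire_ham: "real_entire_ham ham"
  unfolding real_entire_ham_def
proof (intro conjI allI exI)
  show "periodic_theta (\<lambda>\<theta>. ham \<theta> r)" for r
    unfolding periodic_theta_def ham_def phase_add_axis by (simp add: sin_add)
  show "entire2 ham_c" by (rule entire_ham_c)
  show "ham_c (z + axis i 1) w = ham_c z w" for z w i
    unfolding ham_c_def by (simp add: ham_term_c_add_axis)
  show "ham_c (cvec \<theta>) (cvec r) = of_real (ham \<theta> r)" for \<theta> r
    by (rule ham_c_cvec)
qed

section \<open>Partial derivatives\<close>

lemma grad_theta_ham: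
  "grad_theta ham \<theta> r $ i = (\<Sum>j. c j * (r $ l) ^ (j + 2) * (2 * pi * of_int (k j $ i) * cos (phase j \<theta>)))"
proof -
  define f where "f j s = c j * (r $ l) ^ (j + 2) * sin (phase j \<theta> + 2 * pi * of_int (k j $ i) * s)"
    for j s
  define f' where "f' j s = c j * (r $ l) ^ (j + 2) *
      (2 * pi * of_int (k j $ i) * cos (phase j \<theta> + 2 * pi * of_int (k j $ i) * s))" for j s
  have "((\<lambda>s. \<Sum>j. f j s) has_field_derivative (\<Sum>j. f' j 0)) (at 0)"
  proof (rule has_field_derivative_suminf_bounded[where M="\<lambda>j. 2 * pi * ((r $ l)\<^sup>2 * majorant \<bar>r $ l\<bar> j)"])
    show "(f j has_field_derivative f' j s) (at s)" for j s
      unfolding f_def f'_def by (auto intro!: derivative_eq_intros simp: algebra_simps)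
    show "\<bar>f' j s\<bar> \<le> 2 * pi * ((r $ l)\<^sup>2 * majorant \<bar>r $ l\<bar> j)" for j s
    proof -
      have "\<bar>f' j s\<bar> = c j * \<bar>r $ l\<bar> ^ (j + 2) * (2 * pi * (\<bar>of_int (k j $ i)\<bar>
          * \<bar>cos (phase j \<theta> + 2 * pi * of_int (k j $ i) * s)\<bar>))"
        unfolding f'_def using c_pos[of j] by (simp add: abs_mult power_abs)
      also have "\<dots> \<le> c j * \<bar>r $ l\<bar> ^ (j + 2) * (2 * pi * (sup_norm (k j) * 1))"
        using c_pos[of j] abs_le_sup_norm[of "k j" i] by (intro mult_left_mono mult_mono) auto
      also have "\<dots> \<le> 2 * pi * ((r $ l)\<^sup>2 * majorant \<bar>r $ l\<bar> j)"
        using c_pow2_sup_norm_le_majorant[of j "r $ l"] by simp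
      finally show ?thesis .
    qed
    show "summable (\<lambda>j. 2 * pi * ((r $ l)\<^sup>2 * majorant \<bar>r $ l\<bar> j))"
      by (intro summable_mult summable_majorant) simp
    show "summable (\<lambda>j. f j 0)" unfolding f_def using ham_series_summable by simp
  qed
  moreover have "(\<lambda>s. ham (\<theta> + s *\<^sub>R axis i 1) r) = (\<lambda>s. \<omega> \<bullet> r + (\<Sum>j. f j s))"
    unfolding ham_def f_def by (simp add: phase_add_scaled_axis)
  ultimately have "((\<lambda>s. ham (\<theta> + s *\<^sub>R axis i 1) r) has_field_derivative (\<Sum>j. f' j 0)) (at 0)"
    by (auto intro!: derivative_eq_intros)
  then show ?thesis
    unfolding grad_theta_def grad_def f'_def by (simp add: DERIV_imp_deriv)
qed

lemma has_real_derivative_ham_series_shift: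
  "((\<lambda>s. \<Sum>j. c j * (x + s) ^ (j + 2) * sin (phase j \<theta>)) has_real_derivative
     (\<Sum>j. c j * (real j + 2) * x ^ (j + 1) * sin (phase j \<theta>))) (at 0)"
proof -
  define f' where "f' j s = c j * (real j + 2) * (x + s) ^ (j + 1) * sin (phase j \<theta>)" for j s
  define R where "R = \<bar>x\<bar> + 1"
  have "((\<lambda>s. \<Sum>j. c j * (x + s) ^ (j + 2) * sin (phase j \<theta>)) has_real_derivative (\<Sum>j. f' j 0)) (at 0)"
  proof (rule has_field_derivative_suminf_bounded[where M="\<lambda>j. R * majorant R j"])
    show "((\<lambda>s. c j * (x + s) ^ (j + 2) * sin (phase j \<theta>)) has_real_derivative f' j s) (at s)" for j s
    proof -
      have "((\<lambda>s. (x + s) ^ (j + 2)) has_real_derivative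
          real (j + 2) * (x + s) ^ (j + 2 - Suc 0) * (0 + 1)) (at s)"
        by (rule DERIV_chain2[OF DERIV_pow DERIV_add[OF DERIV_const DERIV_ident]])
      then have "((\<lambda>s. c j * (x + s) ^ (j + 2) * sin (phase j \<theta>)) has_real_derivative
          c j * (real (j + 2) * (x + s) ^ (j + 2 - Suc 0) * (0 + 1)) * sin (phase j \<theta>)) (at s)"
        by (intro DERIV_cmult DERIV_cmult_right)
      then show ?thesis unfolding f'_def by (rule DERIV_cong) (simp add: algebra_simps)
    qed
    show "\<bar>f' j s\<bar> \<le> R * majorant R j" if "\<bar>s - 0\<bar> \<le> 1" for j s
    proof -
      have R: "\<bar>x + s\<bar> \<le> R" "\<bar>R\<bar> = R" using that unfolding R_def by auto
      have "\<bar>f' j s\<bar> = c j * (real j + 2) * \<bar>x + s\<bar> ^ (j + 1) * \<bar>sin (phase j \<theta>)\<bar>"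
        unfolding f'_def using c_pos[of j] by (simp add: abs_mult power_abs)
      also have "\<dots> \<le> c j * (real j + 2) * R ^ (j + 1) * 1"
        using c_pos[of j] R by (intro mult_mono power_mono) auto
      also have "\<dots> \<le> R * majorant R j"
        using c_weight_pow_Suc_le_majorant[of j R] R(2) by simp
      finally show ?thesis .
    qed
    show "summable (\<lambda>j. R * majorant R j)"
      unfolding R_def by (intro summable_mult summable_majorant) simp
    show "summable (\<lambda>j. c j * (x + 0) ^ (j + 2) * sin (phase j \<theta>))"
      using ham_series_summable[of "\<chi> _. x"] by simp
  qed
  then show ?thesis unfolding f'_def by simp
qed

lemma grad_r_ham:
  "grad_r ham \<theta> r $ i = \<omega> $ i +
     (if i = l then (\<Sum>j. c j * (real j + 2) * (r $ l) ^ (j + 1) * sin (phase j \<theta>)) else 0)"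
proof -
  have inner: "\<omega> \<bullet> (r + s *\<^sub>R axis i 1) = \<omega> \<bullet> r + s * \<omega> $ i" for s
    by (simp add: inner_add_right inner_axis)
  show ?thesis
  proof (cases "i = l")
    case False
    then have "ham \<theta> (r + s *\<^sub>R axis i 1) = \<omega> \<bullet> r + s * \<omega> $ i + (ham \<theta> r - \<omega> \<bullet> r)" for s
      unfolding ham_def inner by (simp add: axis_def)
    then have "((\<lambda>s. ham \<theta> (r + s *\<^sub>R axis i 1)) has_real_derivative \<omega> $ i) (at 0)"
      by (auto intro!: derivative_eq_intros)
    then show ?thesis using False unfolding grad_r_def grad_def by (simp add: DERIV_imp_deriv)
  next
    case True
    then have "(\<lambda>s. ham \<theta> (r + s *\<^sub>R axis i 1))
        = (\<lambda>s. \<omega> \<bullet> r + s * \<omega> $ i + (\<Sum>j. c j * (r $ l + s) ^ (j + 2) * sin (phase j \<theta>)))"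
      unfolding ham_def inner by (simp add: axis_def)
    moreover have "((\<lambda>s. \<omega> \<bullet> r + s * \<omega> $ i + (\<Sum>j. c j * (r $ l + s) ^ (j + 2) * sin (phase j \<theta>)))
        has_real_derivative \<omega> $ i + (\<Sum>j. c j * (real j + 2) * (r $ l) ^ (j + 1) * sin (phase j \<theta>))) (at 0)"
      by (rule DERIV_add[OF _ has_real_derivative_ham_series_shift]) (auto intro!: derivative_eq_intros)
    ultimately have "((\<lambda>s. ham \<theta> (r + s *\<^sub>R axis i 1)) has_real_derivative
        \<omega> $ i + (\<Sum>j. c j * (real j + 2) * (r $ l) ^ (j + 1) * sin (phase j \<theta>))) (at 0)"
      by simp
    then show ?thesis using True unfolding grad_r_def grad_def by (simp add: DERIV_imp_deriv)
  qed
qed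

lemma summable_c: "summable c"
  by (rule summable_if_le_majorant[of 1 _ 1]) (use c_pos c_pow_le_majorant[of 1] in \<open>auto simp: less_imp_le\<close>)

lemma ham_quadratic: "\<bar>ham \<theta> r - \<omega> \<bullet> r\<bar> \<le> (\<Sum>j. c j) * (norm r)\<^sup>2" if "norm r < 1"
proof -
  have rl: "\<bar>r $ l\<bar> \<le> norm r" by (rule component_le_norm_cart)
  have "c j * \<bar>r $ l\<bar> ^ (j + 2) \<le> c j * (norm r)\<^sup>2" for j
    using c_pos[of j] rl that power_decreasing[of 2 "j + 2" "\<bar>r $ l\<bar>"] power_mono[OF rl, of 2]
    by (intro mult_left_mono) auto
  then have term_le: "norm (c j * (r $ l) ^ (j + 2) * sin (phase j \<theta>)) \<le> c j * (norm r)\<^sup>2" for j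
    using abs_ham_term_le[of j "r $ l" \<theta>] unfolding real_norm_def by (rule order_trans[rotated])
  have "\<bar>ham \<theta> r - \<omega> \<bullet> r\<bar> = norm (\<Sum>j. c j * (r $ l) ^ (j + 2) * sin (phase j \<theta>))"
    unfolding ham_def by simp
  also have "\<dots> \<le> (\<Sum>j. c j * (norm r)\<^sup>2)"
    by (rule norm_suminf_le[OF term_le summable_mult2[OF summable_c]])
  also have "\<dots> = (\<Sum>j. c j) * (norm r)\<^sup>2" by (rule suminf_mult2[symmetric, OF summable_c])
  finally show ?thesis .
qed

section \<open>The Birkhoff normal form\<close>

definition gen_coeff :: "nat \<Rightarrow> real^'n \<Rightarrow> real" where
  "gen_coeff j \<theta> = c j / (2 * pi * freq j) * cos (phase j \<theta>)"

definition l_power :: "nat \<Rightarrow> 'n \<Rightarrow> nat" where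
  "l_power j = (\<lambda>m. if m = l then j + 2 else 0)"

(* Coefficient of r^alpha in the generating function f(theta, r) = sum_j gen_coeff j theta * r_l^(j+2). *)
definition gen_fun :: "('n \<Rightarrow> nat) \<Rightarrow> real^'n \<Rightarrow> real" where
  "gen_fun \<alpha> = (if \<alpha> \<in> range l_power then gen_coeff (\<alpha> l - 2) else (\<lambda>_. 0))"

lemma l_power_l [simp]: "l_power j l = j + 2"
  unfolding l_power_def by simp

lemma inj_l_power: "inj l_power"
  by (rule injI) (metis l_power_l add_right_cancel)

lemma gen_fun_l_power: "gen_fun (l_power j) = gen_coeff j"
  unfolding gen_fun_def by simp

lemma mdeg_l_power: "mdeg (l_power j) = j + 2"
  unfolding mdeg_def l_power_def by (simp add: sum.delta)

lemma monom_l_power: "monom (l_power j) r = (r $ l) ^ (j + 2)"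
  unfolding monom_def l_power_def by (simp add: if_distrib prod.delta cong: if_cong)

lemma grad_gen_coeff: "grad (gen_coeff j) \<theta> $ i = - (c j * sin (phase j \<theta>) * of_int (k j $ i) / freq j)"
proof -
  have "((\<lambda>s. gen_coeff j (\<theta> + s *\<^sub>R axis i 1)) has_field_derivative
      c j / (2 * pi * freq j) * (- sin (phase j \<theta> + 2 * pi * of_int (k j $ i) * 0)
        * (2 * pi * of_int (k j $ i)))) (at 0)"
    unfolding gen_coeff_def phase_add_scaled_axis
    by (rule DERIV_cmult derivative_eq_intros refl | simp)+
  then show ?thesis
    unfolding grad_def using freq_nonzero[of j] by (simp add: DERIV_imp_deriv field_simps)
qed

lemma grad_gen_coeff_l: "grad (gen_coeff j) \<theta> $ l = 0"
  by (simp add: grad_gen_coeff k_l)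

lemma inner_grad_gen_coeff: "\<omega> \<bullet> grad (gen_coeff j) \<theta> = - (c j * sin (phase j \<theta>))"
proof -
  have "\<omega> \<bullet> grad (gen_coeff j) \<theta>
      = (\<Sum>i\<in>UNIV. - (c j * sin (phase j \<theta>) / freq j) * (of_int (k j $ i) * \<omega> $ i))"
    unfolding inner_vec_def grad_gen_coeff by (intro sum.cong) (auto simp: field_simps)
  also have "\<dots> = - (c j * sin (phase j \<theta>) / freq j) * int_inner (k j) \<omega>"
    unfolding int_inner_def by (rule sum_distrib_left[symmetric])
  finally have "\<omega> \<bullet> grad (gen_coeff j) \<theta> = - (c j * sin (phase j \<theta>) / freq j) * int_inner (k j) \<omega>" .
  then show ?thesis using freq_nonzero[of j] unfolding freq_def by simp
qed

lemma real_analytic_gen_coeff: "real_analytic_vec (gen_coeff j)"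
  unfolding real_analytic_vec_def
proof (intro exI conjI allI)
  define G where "G z = of_real (c j / (2 * pi * freq j)) * cos (phase j z)" for z :: "complex^'n"
  show "open (UNIV :: (complex^'n) set)" "cvec \<theta> \<in> UNIV" for \<theta> :: "real^'n" by simp_all
  show "G (cvec \<theta>) = of_real (gen_coeff j \<theta>)" for \<theta>
    unfolding G_def gen_coeff_def by (simp add: phase_cvec cos_of_real)
  show "holo_on_vec G UNIV"
    unfolding holo_on_vec_def
  proof (intro ballI exI conjI allI)
    fix z :: "complex^'n"
    have "(phase j has_derivative phase j) (at z)"
      unfolding phase_def[abs_def]
      by (intro bounded_linear_imp_has_derivative
          bounded_linear_compose[OF bounded_linear_mult_right bounded_linear_int_inner])
    then show "(G has_derivative (\<lambda>h. of_real (c j / (2 * pi * freq j)) * (phase j h * - sin (phase j z)))) (at z)"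
      unfolding G_def by (intro has_derivative_mult_right has_derivative_cos_comp)
    show "of_real (c j / (2 * pi * freq j)) * (phase j (cmul a v) * - sin (phase j z)) =
        a * (of_real (c j / (2 * pi * freq j)) * (phase j v * - sin (phase j z)))" for a v
      by (simp add: phase_cmul algebra_simps)
  qed
qed

lemma periodic_gen_coeff: "periodic_theta (gen_coeff j)"
  unfolding periodic_theta_def gen_coeff_def phase_add_axis by (simp add: cos_add)

lemma dtheta_trunc_gen_fun:
  "dtheta_trunc gen_fun n \<theta> r = (\<Sum>j<n - 1. (r $ l) ^ (j + 2) *\<^sub>R grad (gen_coeff j) \<theta>)"
proof -
  let ?g = "\<lambda>\<alpha>. monom \<alpha> r *\<^sub>R grad (gen_fun \<alpha>) \<theta>"
  have sub: "l_power ` {..<n - 1} \<subseteq> {\<alpha>. mdeg \<alpha> \<le> n}" using mdeg_l_power by auto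
  have "?g \<alpha> = 0" if "\<alpha> \<in> {\<alpha>. mdeg \<alpha> \<le> n} - l_power ` {..<n - 1}" for \<alpha>
  proof (cases "\<alpha> \<in> range l_power")
    case True
    then obtain j where "\<alpha> = l_power j" by blast
    with that show ?thesis using mdeg_l_power[of j] by auto
  qed (simp add: gen_fun_def grad_const_zero)
  then have "sum ?g {\<alpha>. mdeg \<alpha> \<le> n} = sum ?g (l_power ` {..<n - 1})"
    by (intro sum.mono_neutral_right[OF finite_mdeg_le sub]) blast
  also have "\<dots> = (\<Sum>j<n - 1. ?g (l_power j))"
    by (rule sum.reindex[OF inj_on_subset[OF inj_l_power subset_UNIV], unfolded comp_def])
  finally show ?thesis
    unfolding dtheta_trunc_def by (simp add: gen_fun_l_power monom_l_power)
qed

lemma is_BNF_ham: "is_BNF ham (\<lambda>r. \<omega> \<bullet> r)"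
  unfolding is_BNF_def
proof (intro exI[of _ gen_fun] conjI allI impI)
  show "real_analytic_vec (gen_fun \<alpha>)" "periodic_theta (gen_fun \<alpha>)" for \<alpha>
    unfolding gen_fun_def
    using real_analytic_gen_coeff real_analytic_const_zero periodic_gen_coeff
    by (auto simp: periodic_theta_def)
  show "gen_fun \<alpha> = (\<lambda>_. 0)" if "mdeg \<alpha> \<le> 1" for \<alpha>
    using that mdeg_l_power unfolding gen_fun_def by auto
  fix n :: nat and \<theta> :: "real^'n"
  define N where "N = n - 1"
  have summable_tail: "summable (\<lambda>i. c (i + N))"
    using summable_c by (rule summable_ignore_initial_segment)
  show "\<exists>C \<delta>. 0 < \<delta> \<and> (\<forall>r. norm r < \<delta> \<longrightarrow>
      \<bar>ham \<theta> (r + dtheta_trunc gen_fun n \<theta> r) - \<omega> \<bullet> r\<bar> \<le> C * norm r ^ (n + 1))"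
  proof (intro exI conjI allI impI)
    fix r :: "real^'n" assume r: "norm r < 1"
    define a where "a j = c j * (r $ l) ^ (j + 2) * sin (phase j \<theta>)" for j
    have rl: "\<bar>r $ l\<bar> \<le> norm r" by (rule component_le_norm_cart)
    have "ham \<theta> (r + dtheta_trunc gen_fun n \<theta> r) - \<omega> \<bullet> r = (\<Sum>j. a j) - (\<Sum>j<N. a j)"
      unfolding ham_def dtheta_trunc_gen_fun a_def N_def
      by (simp add: inner_add_right inner_sum_right grad_gen_coeff_l inner_grad_gen_coeff sum_negf
          ac_simps)
    also have "\<dots> = (\<Sum>i. a (i + N))"
      using suminf_split_initial_segment[OF ham_series_summable, of "r" \<theta> N] unfolding a_def by simp
    finally have eq: "ham \<theta> (r + dtheta_trunc gen_fun n \<theta> r) - \<omega> \<bullet> r = (\<Sum>i. a (i + N))" .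
    have "norm (a (i + N)) \<le> c (i + N) * norm r ^ (n + 1)" for i
    proof -
      have "\<bar>r $ l\<bar> ^ (i + N + 2) \<le> \<bar>r $ l\<bar> ^ (n + 1)"
        using rl r unfolding N_def by (intro power_decreasing) auto
      also have "\<dots> \<le> norm r ^ (n + 1)" using rl by (intro power_mono) auto
      finally show ?thesis
        using abs_ham_term_le[of "i + N" "r $ l" \<theta>] c_pos[of "i + N"] unfolding a_def real_norm_def
        by (meson mult_left_mono less_imp_le order_trans)
    qed
    then have "\<bar>\<Sum>i. a (i + N)\<bar> \<le> (\<Sum>i. c (i + N) * norm r ^ (n + 1))"
      unfolding real_norm_def[symmetric] by (rule norm_suminf_le) (rule summable_mult2[OF summable_tail])
    then show "\<bar>ham \<theta> (r + dtheta_trunc gen_fun n \<theta> r) - \<omega> \<bullet> r\<bar> \<le> (\<Sum>i. c (i + N)) * norm r ^ (n + 1)"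
      unfolding eq suminf_mult2[OF summable_tail] .
  qed simp
qed

section \<open>The flow\<close>

lemma c_le_1: "c j \<le> 1"
proof -
  have "0 \<le> (real j + 1) * (sup_norm (k j) + real j + 1)"
    using sup_norm_ge_1[of j] by (intro mult_nonneg_nonneg) auto
  then have "exp (- (real j + 1) * (sup_norm (k j) + real j + 1)) \<le> 1"
    by (simp only: mult_minus_left exp_le_one_iff neg_le_0_iff_le)
  then show ?thesis using c_le_exp[of j] by linarith
qed

lemma prev_sq_pos: "0 < prev_sq c j"
  unfolding prev_sq_def using c_pos[of "j - 1"] by simp

lemma prev_sq_le_1: "prev_sq c j \<le> 1"
  unfolding prev_sq_def using c_le_1 c_pos by (simp add: power_le_one less_imp_le)

lemma c_sup_norm_le_prev_sq: "c j * sup_norm (k j) \<le> prev_sq c j"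
  using c_sup_norm_le[of j] prev_sq_pos[of j] mult_left_le[of "exp (- (real j * (real j + 2)))"]
  by (simp add: order_trans less_imp_le)

lemma c_Suc_le: "c (Suc j) \<le> c j"
proof -
  have "c (Suc j) \<le> c (Suc j) * sup_norm (k (Suc j))"
    using c_pos[of "Suc j"] sup_norm_ge_1[of "Suc j"] by simp
  also have "\<dots> \<le> c j * c j" using c_sup_norm_le_prev_sq[of "Suc j"] by (simp add: prev_sq_def power2_eq_square)
  also have "\<dots> \<le> c j" using c_le_1[of j] c_pos[of j] by (simp add: mult_left_le)
  finally show ?thesis .
qed

lemma c_antimono: "j \<le> i \<Longrightarrow> c i \<le> c j"
  by (induction i rule: dec_induct) (use c_Suc_le order_trans in auto)

lemma phase_eq_off_l:
  assumes "\<And>m. m \<noteq> l \<Longrightarrow> \<theta> $ m = \<theta>0 $ m + \<omega> $ m * t"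
  shows "phase j \<theta> = phase j \<theta>0 + 2 * pi * freq j * t"
  using int_inner_eq_off_coord[OF k_l[of j] assms] unfolding phase_def freq_def
  by (simp add: algebra_simps)

(* action_term and angle_term are the integrals over [0, t] of the j-th terms of - dH/dtheta_i and
   of dH/dr_l along the flow, on which r_l = s is conserved and phase j rotates with frequency freq j. *)
definition sin_increment :: "nat \<Rightarrow> real^'n \<Rightarrow> real \<Rightarrow> real" where
  "sin_increment j \<theta>0 t = sin (phase j \<theta>0 + 2 * pi * freq j * t) - sin (phase j \<theta>0)"

definition action_term :: "real^'n \<Rightarrow> real \<Rightarrow> 'n \<Rightarrow> nat \<Rightarrow> real \<Rightarrow> real" where
  "action_term \<theta>0 s i j t = c j * s ^ (j + 2) * of_int (k j $ i) * sin_increment j \<theta>0 t / freq j"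

definition action_shift :: "real^'n \<Rightarrow> real \<Rightarrow> 'n \<Rightarrow> real \<Rightarrow> real" where
  "action_shift \<theta>0 s i t = (\<Sum>j. action_term \<theta>0 s i j t)"

definition angle_term :: "real^'n \<Rightarrow> real \<Rightarrow> nat \<Rightarrow> real \<Rightarrow> real" where
  "angle_term \<theta>0 s j t = c j * (real j + 2) * s ^ (j + 1) *
     (cos (phase j \<theta>0) - cos (phase j \<theta>0 + 2 * pi * freq j * t)) / (2 * pi * freq j)"

definition angle_shift :: "real^'n \<Rightarrow> real \<Rightarrow> real \<Rightarrow> real" where
  "angle_shift \<theta>0 s t = (\<Sum>j. angle_term \<theta>0 s j t)"

lemma abs_sin_increment_le_time: "\<bar>sin_increment j \<theta>0 t\<bar> \<le> 2 * pi * c j ^ 2 * \<bar>t\<bar>"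
  using abs_sin_diff_le[of "phase j \<theta>0 + 2 * pi * freq j * t" "phase j \<theta>0"]
  unfolding sin_increment_def by (simp add: abs_mult abs_freq)

lemma abs_sin_increment_le_2: "\<bar>sin_increment j \<theta>0 t\<bar> \<le> 2"
  using abs_sin_le_one[of "phase j \<theta>0 + 2 * pi * freq j * t"] abs_sin_le_one[of "phase j \<theta>0"]
  unfolding sin_increment_def by linarith

lemma abs_action_term:
  "\<bar>action_term \<theta>0 s i j t\<bar> = c j * \<bar>s\<bar> ^ (j + 2) * \<bar>of_int (k j $ i)\<bar> * (\<bar>sin_increment j \<theta>0 t\<bar> / c j ^ 2)"
  unfolding action_term_def abs_divide abs_mult abs_freq using c_pos[of j] by (simp add: power_abs abs_mult)

lemma abs_action_term_le_time:
  "\<bar>action_term \<theta>0 s i j t\<bar> \<le> 2 * pi * \<bar>t\<bar> * (c j * \<bar>s\<bar> ^ (j + 2) * sup_norm (k j))"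
proof -
  have "\<bar>sin_increment j \<theta>0 t\<bar> / c j ^ 2 \<le> 2 * pi * \<bar>t\<bar>"
    using abs_sin_increment_le_time[of j \<theta>0 t] c_pos[of j] by (simp add: divide_le_eq mult_ac)
  then have "\<bar>action_term \<theta>0 s i j t\<bar> \<le> c j * \<bar>s\<bar> ^ (j + 2) * sup_norm (k j) * (2 * pi * \<bar>t\<bar>)"
    unfolding abs_action_term using c_pos[of j] abs_le_sup_norm[of "k j" i]
    by (intro mult_mono) auto
  then show ?thesis by (simp add: mult_ac)
qed

lemma abs_action_term_le:
  "\<bar>action_term \<theta>0 s i j t\<bar> \<le> 2 * \<bar>s\<bar> ^ (j + 2) * (c j * sup_norm (k j)) / c j ^ 2"
proof -
  have "\<bar>action_term \<theta>0 s i j t\<bar> \<le> c j * \<bar>s\<bar> ^ (j + 2) * sup_norm (k j) * (2 / c j ^ 2)"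
    unfolding abs_action_term using c_pos[of j] abs_le_sup_norm[of "k j" i] abs_sin_increment_le_2
    by (intro mult_mono divide_right_mono) auto
  then show ?thesis by (simp add: mult_ac)
qed

lemma abs_angle_term_le: "\<bar>angle_term \<theta>0 s j t\<bar> \<le> \<bar>t\<bar> * (c j * (real j + 2) * \<bar>s\<bar> ^ (j + 1))"
proof -
  define \<Delta> where "\<Delta> = cos (phase j \<theta>0) - cos (phase j \<theta>0 + 2 * pi * freq j * t)"
  have "\<bar>\<Delta>\<bar> / \<bar>2 * pi * freq j\<bar> \<le> \<bar>t\<bar>"
    using abs_cos_diff_le[of "phase j \<theta>0" "phase j \<theta>0 + 2 * pi * freq j * t"] freq_nonzero[of j]
    unfolding \<Delta>_def by (simp add: divide_le_eq abs_mult mult_ac)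
  moreover have "\<bar>angle_term \<theta>0 s j t\<bar> = c j * (real j + 2) * \<bar>s\<bar> ^ (j + 1) * (\<bar>\<Delta>\<bar> / \<bar>2 * pi * freq j\<bar>)"
    unfolding angle_term_def \<Delta>_def[symmetric] abs_divide abs_mult using c_pos[of j]
    by (simp add: power_abs abs_mult)
  moreover have "0 \<le> c j * (real j + 2) * \<bar>s\<bar> ^ (j + 1)" using c_pos[of j] by simp
  ultimately have "\<bar>angle_term \<theta>0 s j t\<bar> \<le> c j * (real j + 2) * \<bar>s\<bar> ^ (j + 1) * \<bar>t\<bar>"
    by (metis mult_left_mono)
  then show ?thesis by (simp add: ac_simps)
qed

lemma summable_action_term: "summable (\<lambda>j. action_term \<theta>0 s i j t)"
proof (rule summable_if_le_majorant[of "\<bar>s\<bar>" _ "2 * pi * \<bar>t\<bar> * s\<^sup>2"])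
  fix j
  have "2 * pi * \<bar>t\<bar> * (c j * \<bar>s\<bar> ^ (j + 2) * sup_norm (k j)) \<le> 2 * pi * \<bar>t\<bar> * (s\<^sup>2 * majorant \<bar>s\<bar> j)"
    by (intro mult_left_mono c_pow2_sup_norm_le_majorant) auto
  then show "\<bar>action_term \<theta>0 s i j t\<bar> \<le> 2 * pi * \<bar>t\<bar> * s\<^sup>2 * majorant \<bar>s\<bar> j"
    using abs_action_term_le_time[of \<theta>0 s i j t] unfolding mult.assoc by linarith
qed simp

lemma summable_angle_term: "summable (\<lambda>j. angle_term \<theta>0 s j t)"
proof (rule summable_if_le_majorant[of "\<bar>s\<bar>" _ "\<bar>t\<bar> * \<bar>s\<bar>"])
  fix j
  have "\<bar>t\<bar> * (c j * (real j + 2) * \<bar>s\<bar> ^ (j + 1)) \<le> \<bar>t\<bar> * (\<bar>s\<bar> * majorant \<bar>s\<bar> j)"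
    by (intro mult_left_mono c_weight_pow_Suc_le_majorant) auto
  then show "\<bar>angle_term \<theta>0 s j t\<bar> \<le> \<bar>t\<bar> * \<bar>s\<bar> * majorant \<bar>s\<bar> j"
    using abs_angle_term_le[of \<theta>0 s j t] unfolding mult.assoc by linarith
qed simp

lemma has_real_derivative_action_shift:
  "(action_shift \<theta>0 s i has_real_derivative
     (\<Sum>j. c j * s ^ (j + 2) * (2 * pi * of_int (k j $ i) * cos (phase j \<theta>0 + 2 * pi * freq j * t)))) (at t)"
  unfolding action_shift_def
proof (rule has_field_derivative_suminf_bounded[where M="\<lambda>j. 2 * pi * (s\<^sup>2 * majorant \<bar>s\<bar> j)"])
  show "(action_term \<theta>0 s i j has_real_derivative
      c j * s ^ (j + 2) * (2 * pi * of_int (k j $ i) * cos (phase j \<theta>0 + 2 * pi * freq j * u))) (at u)"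
    for j u
    unfolding action_term_def sin_increment_def using freq_nonzero[of j]
    by (auto intro!: derivative_eq_intros simp: field_simps)
  show "\<bar>c j * s ^ (j + 2) * (2 * pi * of_int (k j $ i) * cos (phase j \<theta>0 + 2 * pi * freq j * u))\<bar>
      \<le> 2 * pi * (s\<^sup>2 * majorant \<bar>s\<bar> j)" for j u
  proof -
    have "\<bar>c j * s ^ (j + 2) * (2 * pi * of_int (k j $ i) * cos (phase j \<theta>0 + 2 * pi * freq j * u))\<bar>
        = 2 * pi * (c j * \<bar>s\<bar> ^ (j + 2) * (\<bar>of_int (k j $ i)\<bar> * \<bar>cos (phase j \<theta>0 + 2 * pi * freq j * u)\<bar>))"
      using c_pos[of j] by (simp add: abs_mult power_abs)
    also have "\<dots> \<le> 2 * pi * (c j * \<bar>s\<bar> ^ (j + 2) * (sup_norm (k j) * 1))"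
      using c_pos[of j] abs_le_sup_norm[of "k j" i] by (intro mult_left_mono mult_mono) auto
    also have "\<dots> \<le> 2 * pi * (s\<^sup>2 * majorant \<bar>s\<bar> j)"
      using c_pow2_sup_norm_le_majorant[of j s] by simp
    finally show ?thesis .
  qed
  show "summable (\<lambda>j. 2 * pi * (s\<^sup>2 * majorant \<bar>s\<bar> j))"
    by (intro summable_mult summable_majorant) simp
  show "summable (\<lambda>j. action_term \<theta>0 s i j t)" by (rule summable_action_term)
qed

lemma has_real_derivative_angle_shift:
  "(angle_shift \<theta>0 s has_real_derivative
     (\<Sum>j. c j * (real j + 2) * s ^ (j + 1) * sin (phase j \<theta>0 + 2 * pi * freq j * t))) (at t)"
  unfolding angle_shift_def
proof (rule has_field_derivative_suminf_bounded[where M="\<lambda>j. \<bar>s\<bar> * majorant \<bar>s\<bar> j"])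
  show "(angle_term \<theta>0 s j has_real_derivative
      c j * (real j + 2) * s ^ (j + 1) * sin (phase j \<theta>0 + 2 * pi * freq j * u)) (at u)" for j u
    unfolding angle_term_def using freq_nonzero[of j]
    by (auto intro!: derivative_eq_intros simp: field_simps)
  show "\<bar>c j * (real j + 2) * s ^ (j + 1) * sin (phase j \<theta>0 + 2 * pi * freq j * u)\<bar>
      \<le> \<bar>s\<bar> * majorant \<bar>s\<bar> j" for j u
  proof -
    have "\<bar>c j * (real j + 2) * s ^ (j + 1) * sin (phase j \<theta>0 + 2 * pi * freq j * u)\<bar>
        \<le> c j * (real j + 2) * \<bar>s\<bar> ^ (j + 1) * 1"
      using c_pos[of j] abs_sin_le_one
      by (simp only: abs_mult power_abs abs_of_pos abs_of_nonneg) (intro mult_left_mono, auto)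
    then show ?thesis using c_weight_pow_Suc_le_majorant[of j s] by simp
  qed
  show "summable (\<lambda>j. \<bar>s\<bar> * majorant \<bar>s\<bar> j)"
    by (intro summable_mult summable_majorant) simp
  show "summable (\<lambda>j. angle_term \<theta>0 s j t)" by (rule summable_angle_term)
qed

lemma action_shift_l: "action_shift \<theta>0 s l t = 0"
  unfolding action_shift_def action_term_def by (simp add: k_l)

lemma action_shift_0: "action_shift \<theta>0 s i 0 = 0"
  unfolding action_shift_def action_term_def sin_increment_def by simp

lemma angle_shift_0: "angle_shift \<theta>0 s 0 = 0"
  unfolding angle_shift_def angle_term_def by simp

definition flow_angle :: "real^'n \<Rightarrow> real^'n \<Rightarrow> real \<Rightarrow> real^'n" where
  "flow_angle \<theta>0 r0 t = (\<chi> m. \<theta>0 $ m + \<omega> $ m * t + (if m = l then angle_shift \<theta>0 (r0 $ l) t else 0))"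

definition flow_action :: "real^'n \<Rightarrow> real^'n \<Rightarrow> real \<Rightarrow> real^'n" where
  "flow_action \<theta>0 r0 t = (\<chi> m. r0 $ m - action_shift \<theta>0 (r0 $ l) m t)"

lemma ham_traj_flow: "ham_traj ham (\<theta>0, r0) (\<lambda>t. (flow_angle \<theta>0 r0 t, flow_action \<theta>0 r0 t))"
  unfolding ham_traj_def fst_conv snd_conv
proof (intro conjI allI impI)
  show "(flow_angle \<theta>0 r0 0, flow_action \<theta>0 r0 0) = (\<theta>0, r0)"
    unfolding flow_angle_def flow_action_def by (simp add: angle_shift_0 action_shift_0 vec_eq_iff)
  fix t :: real
  define s where "s = r0 $ l"
  have action_l: "flow_action \<theta>0 r0 t $ l = s"
    unfolding flow_action_def s_def by (simp add: action_shift_l)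
  have phase: "phase j (flow_angle \<theta>0 r0 t) = phase j \<theta>0 + 2 * pi * freq j * t" for j
    by (rule phase_eq_off_l) (simp add: flow_angle_def)
  have "(flow_angle \<theta>0 r0 has_vector_derivative grad_r ham (flow_angle \<theta>0 r0 t) (flow_action \<theta>0 r0 t))
      (at t within {0..})"
  proof (rule has_vector_derivative_componentwise)
    fix m
    show "((\<lambda>t. flow_angle \<theta>0 r0 t $ m) has_vector_derivative
        grad_r ham (flow_angle \<theta>0 r0 t) (flow_action \<theta>0 r0 t) $ m) (at t within {0..})"
      unfolding grad_r_ham action_l phase has_real_derivative_iff_has_vector_derivative[symmetric]
      by (cases "m = l") (auto simp: flow_angle_def s_def intro!: derivative_eq_intros
          has_field_derivative_at_within[OF has_real_derivative_angle_shift])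
  qed
  moreover have "(flow_action \<theta>0 r0 has_vector_derivative - grad_theta ham (flow_angle \<theta>0 r0 t) (flow_action \<theta>0 r0 t))
      (at t within {0..})"
  proof (rule has_vector_derivative_componentwise)
    fix m
    show "((\<lambda>t. flow_action \<theta>0 r0 t $ m) has_vector_derivative
        (- grad_theta ham (flow_angle \<theta>0 r0 t) (flow_action \<theta>0 r0 t)) $ m) (at t within {0..})"
      unfolding vector_uminus_component grad_theta_ham action_l phase
        has_real_derivative_iff_has_vector_derivative[symmetric]
      by (auto simp: flow_action_def s_def intro!: derivative_eq_intros
          has_field_derivative_at_within[OF has_real_derivative_action_shift])
  qed
  ultimately show "((\<lambda>t. (flow_angle \<theta>0 r0 t, flow_action \<theta>0 r0 t)) has_vector_derivative
      (grad_r ham (flow_angle \<theta>0 r0 t) (flow_action \<theta>0 r0 t),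
       - grad_theta ham (flow_angle \<theta>0 r0 t) (flow_action \<theta>0 r0 t))) (at t within {0..})"
    by (rule has_vector_derivative_Pair)
qed

lemma ham_traj_action:
  assumes traj: "ham_traj ham (\<theta>0, r0) x" and "0 \<le> t"
  shows "snd (x t) $ i = r0 $ i - action_shift \<theta>0 (r0 $ l) i t"
proof -
  define s where "s = r0 $ l"
  have x0: "x 0 = (\<theta>0, r0)" using traj unfolding ham_traj_def by simp
  have D: "(x has_vector_derivative
      (grad_r ham (fst (x u)) (snd (x u)), - grad_theta ham (fst (x u)) (snd (x u)))) (at u within {0..})"
    if "0 \<le> u" for u
    using traj that unfolding ham_traj_def by simp
  have action_l: "snd (x u) $ l = s" if "0 \<le> u" for u
  proof -
    have "((\<lambda>u. snd (x u) $ l) has_real_derivative 0) (at v within {0..})" if "0 \<le> v" for v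
      using has_vector_derivative_snd_nth[OF D[OF that], of l]
      unfolding has_real_derivative_iff_has_vector_derivative by (simp add: grad_theta_ham k_l)
    from zero_derivative_nonneg_imp_eq[OF this \<open>0 \<le> u\<close>] show ?thesis using x0 by (simp add: s_def)
  qed
  have angle: "fst (x u) $ m = \<theta>0 $ m + \<omega> $ m * u" if "0 \<le> u" "m \<noteq> l" for u m
  proof -
    have "((\<lambda>u. fst (x u) $ m - \<omega> $ m * u) has_real_derivative 0) (at v within {0..})"
      if "0 \<le> v" for v
    proof -
      have "((\<lambda>u. fst (x u) $ m) has_real_derivative \<omega> $ m) (at v within {0..})"
        using has_vector_derivative_fst_nth[OF D[OF that], of m] \<open>m \<noteq> l\<close>
        unfolding has_real_derivative_iff_has_vector_derivative by (simp add: grad_r_ham)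
      then show ?thesis by (auto intro!: derivative_eq_intros)
    qed
    from zero_derivative_nonneg_imp_eq[OF this \<open>0 \<le> u\<close>] show ?thesis using x0 by simp
  qed
  have "((\<lambda>u. snd (x u) $ i + action_shift \<theta>0 s i u) has_real_derivative 0) (at v within {0..})"
    if "0 \<le> v" for v
  proof -
    have "phase j (fst (x v)) = phase j \<theta>0 + 2 * pi * freq j * v" for j
      by (rule phase_eq_off_l) (use angle that in auto)
    then have "((\<lambda>u. snd (x u) $ i) has_real_derivative - (\<Sum>j. c j * s ^ (j + 2) *
        (2 * pi * of_int (k j $ i) * cos (phase j \<theta>0 + 2 * pi * freq j * v)))) (at v within {0..})"
      using has_vector_derivative_snd_nth[OF D[OF that], of i]
      unfolding has_real_derivative_iff_has_vector_derivative by (simp add: grad_theta_ham action_l that)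
    then show ?thesis
      by (auto intro!: derivative_eq_intros has_field_derivative_at_within[OF has_real_derivative_action_shift])
  qed
  from zero_derivative_nonneg_imp_eq[OF this \<open>0 \<le> t\<close>] show ?thesis
    using x0 by (simp add: s_def action_shift_0)
qed

lemma abs_action_term_ge:
  assumes "real_of_int \<bar>k m $ i\<bar> = sup_norm (k m)" and "1 \<le> \<bar>sin_increment m \<theta>0 t\<bar>"
  shows "(1 + real m / prev_sq c m) * (\<bar>s\<bar> * exp (real m)) ^ (m + 2) \<le> \<bar>action_term \<theta>0 s i m t\<bar>"
proof -
  have cm: "0 < c m" by (rule c_pos)
  have "exp (real m) ^ (m + 2) * (1 + real m / prev_sq c m) \<le> 1 / c m"
    using c_exp_le_1[of m] cm exp_of_nat_mult[of "m + 2" "real m"]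
    by (simp add: le_divide_eq algebra_simps)
  then have "\<bar>s\<bar> ^ (m + 2) * (exp (real m) ^ (m + 2) * (1 + real m / prev_sq c m))
      \<le> \<bar>s\<bar> ^ (m + 2) * (1 / c m)"
    by (rule mult_left_mono) simp
  then have "(1 + real m / prev_sq c m) * (\<bar>s\<bar> * exp (real m)) ^ (m + 2) \<le> \<bar>s\<bar> ^ (m + 2) * (1 / c m)"
    by (simp add: power_mult_distrib mult_ac)
  also have "\<dots> = c m * \<bar>s\<bar> ^ (m + 2) * 1 * (1 / c m ^ 2)"
    using cm by (simp add: power2_eq_square)
  also have "\<dots> \<le> c m * \<bar>s\<bar> ^ (m + 2) * \<bar>of_int (k m $ i)\<bar> * (\<bar>sin_increment m \<theta>0 t\<bar> / c m ^ 2)"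
    using assms cm sup_norm_ge_1[of m] by (intro mult_mono divide_right_mono) auto
  finally show ?thesis unfolding abs_action_term .
qed

lemma abs_sum_action_terms_before_le:
  assumes "1 \<le> m" "\<bar>s\<bar> \<le> Q" "1 \<le> Q"
  shows "\<bar>\<Sum>j<m. action_term \<theta>0 s i j t\<bar> \<le> real m * (2 * Q ^ (m + 1) / prev_sq c m)"
proof -
  have "\<bar>action_term \<theta>0 s i j t\<bar> \<le> 2 * Q ^ (m + 1) / prev_sq c m" if "j < m" for j
  proof -
    have "\<bar>s\<bar> ^ (j + 2) \<le> Q ^ (j + 2)" using assms(2) by (intro power_mono) auto
    also have "\<dots> \<le> Q ^ (m + 1)" using assms(3) that by (intro power_increasing) auto
    finally have "\<bar>s\<bar> ^ (j + 2) \<le> Q ^ (m + 1)" .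
    moreover have "c j * sup_norm (k j) \<le> 1"
      using c_sup_norm_le_prev_sq[of j] prev_sq_le_1[of j] by linarith
    moreover have "c (m - 1) ^ 2 \<le> c j ^ 2"
      using c_antimono[of j "m - 1"] that c_pos[of "m - 1"] by (intro power_mono) auto
    ultimately have "2 * \<bar>s\<bar> ^ (j + 2) * (c j * sup_norm (k j)) / c j ^ 2 \<le> 2 * Q ^ (m + 1) * 1 / c (m - 1) ^ 2"
      using assms c_pos[of j] c_pos[of "m - 1"] sup_norm_ge_1[of j]
      by (intro frac_le mult_mono) auto
    then show ?thesis
      using abs_action_term_le[of \<theta>0 s i j t] assms(1) by (simp add: prev_sq_def)
  qed
  then have "(\<Sum>j<m. \<bar>action_term \<theta>0 s i j t\<bar>) \<le> real m * (2 * Q ^ (m + 1) / prev_sq c m)"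
    using sum_mono[of "{..<m}" "\<lambda>j. \<bar>action_term \<theta>0 s i j t\<bar>" "\<lambda>_. 2 * Q ^ (m + 1) / prev_sq c m"]
    by simp
  then show ?thesis using sum_abs[of "\<lambda>j. action_term \<theta>0 s i j t" "{..<m}"] by linarith
qed

lemma abs_sum_action_terms_after_le:
  assumes "2 * Q \<le> exp (real m)" "1 \<le> Q" "\<bar>s\<bar> \<le> Q" "0 \<le> t" "c m ^ 2 * t \<le> T"
  shows "\<bar>\<Sum>n. action_term \<theta>0 s i (n + Suc m) t\<bar> \<le> 4 * pi * T"
proof -
  have "0 \<le> c m ^ 2 * t" using assms(4) by simp
  then have T: "0 \<le> T" using assms(5) by linarith
  have bound: "\<bar>action_term \<theta>0 s i (n + Suc m) t\<bar> \<le> 2 * pi * T * (1 / 2) ^ n" for n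
  proof -
    define j where "j = n + Suc m"
    have "\<bar>action_term \<theta>0 s i j t\<bar> \<le> 2 * pi * t * ((c j * sup_norm (k j)) * \<bar>s\<bar> ^ (j + 2))"
      using abs_action_term_le_time[of \<theta>0 s i j t] assms(4) by (simp add: mult_ac)
    also have "\<dots> \<le> 2 * pi * t * ((prev_sq c j * exp (- (real j * (real j + 2)))) * Q ^ (j + 2))"
    proof -
      have "(c j * sup_norm (k j)) * \<bar>s\<bar> ^ (j + 2)
          \<le> (prev_sq c j * exp (- (real j * (real j + 2)))) * Q ^ (j + 2)"
        by (rule mult_mono[OF c_sup_norm_le power_mono[OF assms(3)]]) (use prev_sq_pos[of j] in auto)
      then show ?thesis using assms(4) by (intro mult_left_mono) auto
    qed
    also have "\<dots> = 2 * pi * (prev_sq c j * t) * (Q * exp (- real j)) ^ (j + 2)"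
      using exp_of_nat_mult[of "j + 2" "- real j"] by (simp add: power_mult_distrib algebra_simps)
    also have "\<dots> \<le> 2 * pi * T * (1 / 2) ^ n"
    proof (intro mult_mono)
      have "prev_sq c j = c (n + m) ^ 2" unfolding prev_sq_def j_def by simp
      also have "\<dots> \<le> c m ^ 2" using c_antimono[of m "n + m"] c_pos[of "n + m"] by (intro power_mono) auto
      finally show "prev_sq c j * t \<le> T" using assms(4,5) mult_right_mono by (metis order_trans)
      have "2 * Q \<le> exp (real j)" using assms(1) unfolding j_def by (simp add: order_trans)
      then have "Q * exp (- real j) \<le> 1 / 2" by (simp add: exp_minus field_simps)
      then have "(Q * exp (- real j)) ^ (j + 2) \<le> (1 / 2) ^ (j + 2)"
        using assms(2) by (intro power_mono) auto
      also have "\<dots> \<le> (1 / 2) ^ n" unfolding j_def by (intro power_decreasing) auto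
      finally show "(Q * exp (- real j)) ^ (j + 2) \<le> (1 / 2) ^ n" .
    qed (use prev_sq_pos[of j] assms T in auto)
    finally show ?thesis unfolding j_def .
  qed
  have "\<bar>\<Sum>n. action_term \<theta>0 s i (n + Suc m) t\<bar> \<le> (\<Sum>n. 2 * pi * T * (1 / 2) ^ n)"
    unfolding real_norm_def[symmetric]
    by (rule norm_suminf_le) (use bound in \<open>auto intro: summable_mult summable_geometric\<close>)
  also have "\<dots> = 4 * pi * T"
    using suminf_mult[OF summable_geometric[of "1 / 2 :: real"], of "2 * pi * T"]
      suminf_geometric[of "1 / 2 :: real"] by simp
  finally show ?thesis .
qed

lemma exists_time_sin_increment_ge_1:
  assumes "0 \<le> T"
  shows "\<exists>t. T \<le> t \<and> c m ^ 2 * t \<le> T + 1 \<and> 1 \<le> \<bar>sin_increment m \<theta>0 t\<bar>"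
proof -
  obtain t where t: "T \<le> t" "t \<le> T + 1 / \<bar>freq m\<bar>" and jump: "1 \<le> \<bar>sin_increment m \<theta>0 t\<bar>"
    using exists_sin_increment_ge_1[OF freq_nonzero[of m], of T "phase m \<theta>0"]
    unfolding sin_increment_def by blast
  have "c m ^ 2 \<le> 1" using c_pos[of m] c_le_1[of m] by (simp add: power_le_one)
  then have "c m ^ 2 * T \<le> T" using mult_right_mono[of _ 1 T] assms by simp
  moreover have "c m ^ 2 * t \<le> c m ^ 2 * T + 1"
    using mult_left_mono[OF t(2), of "c m ^ 2"] c_pos[of m] by (simp add: abs_freq distrib_left)
  ultimately show ?thesis using t(1) jump by (intro exI[of _ t]) auto
qed

lemma action_shift_unbounded:
  assumes "s \<noteq> 0"
  shows "\<exists>t\<ge>T. \<exists>i. B < \<bar>r0 $ i - action_shift \<theta>0 s i t\<bar>"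
proof -
  define Q where "Q = max 1 \<bar>s\<bar>"
  define T' where "T' = max T 0"
  have Q: "1 \<le> Q" "\<bar>s\<bar> \<le> Q" and T': "0 \<le> T'" "T \<le> T'" unfolding Q_def T'_def by auto
  obtain m :: nat where m: "max (2 * Q / \<bar>s\<bar>) (2 * Q) \<le> exp (real m)"
    "max 1 (B + norm r0 + 4 * pi * (T' + 1)) \<le> real m"
    using exists_nat_exp_ge by blast
  then have "1 \<le> m" and Qm: "2 * Q \<le> exp (real m)" by auto
  have Qs: "2 * Q \<le> \<bar>s\<bar> * exp (real m)" using m(1) assms by (simp add: divide_le_eq mult.commute)
  obtain i where i: "real_of_int \<bar>k m $ i\<bar> = sup_norm (k m)" using sup_norm_attained by blast
  obtain t where t: "T' \<le> t" "c m ^ 2 * t \<le> T' + 1" and jump: "1 \<le> \<bar>sin_increment m \<theta>0 t\<bar>"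
    using exists_time_sin_increment_ge_1[OF T'(1)] by blast
  define X where "X = (\<bar>s\<bar> * exp (real m)) ^ (m + 2)"
  have "X \<le> \<bar>action_term \<theta>0 s i m t\<bar> - \<bar>\<Sum>j<m. action_term \<theta>0 s i j t\<bar>"
  proof -
    have "real m * (2 * Q ^ (m + 1) / prev_sq c m) \<le> real m / prev_sq c m * X"
      using power_bounds_of_double_le(1)[OF Q(1) Qs, of m] prev_sq_pos[of m]
      unfolding X_def by (simp add: divide_le_eq mult_left_mono)
    moreover have "(1 + real m / prev_sq c m) * X \<le> \<bar>action_term \<theta>0 s i m t\<bar>"
      using abs_action_term_ge[OF i jump, of s] unfolding X_def .
    moreover have "\<bar>\<Sum>j<m. action_term \<theta>0 s i j t\<bar> \<le> real m * (2 * Q ^ (m + 1) / prev_sq c m)"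
      by (rule abs_sum_action_terms_before_le[OF \<open>1 \<le> m\<close> Q(2,1)])
    moreover have "(1 + real m / prev_sq c m) * X = X + real m / prev_sq c m * X"
      by (simp add: distrib_right)
    ultimately show ?thesis by linarith
  qed
  moreover have "action_shift \<theta>0 s i t = (\<Sum>n. action_term \<theta>0 s i (n + Suc m) t)
      + (\<Sum>j<m. action_term \<theta>0 s i j t) + action_term \<theta>0 s i m t"
    unfolding action_shift_def
    using suminf_split_initial_segment[OF summable_action_term, of \<theta>0 s i t "Suc m"] by simp
  moreover have "\<bar>\<Sum>n. action_term \<theta>0 s i (n + Suc m) t\<bar> \<le> 4 * pi * (T' + 1)"
    using t T' by (intro abs_sum_action_terms_after_le[OF Qm Q(1,2) _ t(2)]) linarith
  moreover have "real m < X" unfolding X_def by (rule power_bounds_of_double_le(2)[OF Q(1) Qs])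
  moreover have "\<bar>r0 $ i\<bar> \<le> norm r0" by (rule component_le_norm_cart)
  ultimately have "B < \<bar>r0 $ i - action_shift \<theta>0 s i t\<bar>" using m by linarith
  then show ?thesis using t T' by (intro exI[of _ t]) auto
qed

lemma ham_traj_unbounded:
  assumes "r $ l \<noteq> 0"
  shows "(\<exists>x. ham_traj ham (\<theta>, r) x) \<and>
    (\<forall>x. ham_traj ham (\<theta>, r) x \<longrightarrow> (\<forall>B T. \<exists>t\<ge>T. norm (snd (x t)) > B))"
proof (intro conjI allI impI)
  show "\<exists>x. ham_traj ham (\<theta>, r) x" using ham_traj_flow by blast
  fix x B T assume traj: "ham_traj ham (\<theta>, r) x"
  obtain t i where t: "max T 0 \<le> t" and B: "B < \<bar>r $ i - action_shift \<theta> (r $ l) i t\<bar>"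
    using action_shift_unbounded[OF assms] by blast
  have "B < \<bar>snd (x t) $ i\<bar>" using B ham_traj_action[OF traj, of t i] t by simp
  also have "\<dots> \<le> norm (snd (x t))" by (rule component_le_norm_cart)
  finally show "\<exists>t\<ge>T. norm (snd (x t)) > B" using t by (intro exI[of _ t]) auto
qed

end

section \<open>Choosing the frequency vectors\<close>

lemma admissible_if_le_exp:
  fixes N a p :: real and m :: nat
  defines "M \<equiv> (real m + 1)\<^sup>2 + (real m + 1) + real m * (real m + 2) + \<bar>ln p\<bar> + ln (1 + real m / p) + 1"
  assumes p: "0 < p" and N: "1 \<le> N" and a: "0 < a" "a \<le> exp (- M * N)"
  shows "admissible N a m p"
  unfolding admissible_def
proof (intro conjI)
  have lp: "0 \<le> ln (1 + real m / p)" using p by simp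
  then have M: "(real m + 1)\<^sup>2 + (real m + 1) \<le> M" "0 \<le> M - 1"
    "real m * (real m + 2) - ln p \<le> M - 1" "real m * (real m + 2) + ln (1 + real m / p) \<le> M"
    unfolding M_def
    using abs_ge_minus_self[of "ln p"] abs_ge_zero[of "ln p"] zero_le_power2[of "real m + 1"]
      mult_nonneg_nonneg[of "real m" "real m + 2"]
    by linarith+
  have "M * 1 \<le> M * N" using M(2) N by (intro mult_left_mono) auto
  then have "exp (- M * N) \<le> exp (- M)" by simp
  then have aM: "a \<le> exp (- M)" using a(2) by linarith
  show "1 \<le> N" "0 < a" by (fact N a(1))+
  have "(real m + 1) * (N + real m + 1) \<le> ((real m + 1)\<^sup>2 + (real m + 1)) * N"
    using N mult_left_mono[OF N, of "(real m + 1)\<^sup>2"] by (simp add: power2_eq_square algebra_simps)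
  also have "\<dots> \<le> M * N" using M(1) N by (intro mult_right_mono) auto
  finally have "exp (- M * N) \<le> exp (- (real m + 1) * (N + real m + 1))"
    by (simp only: exp_le_cancel_iff mult_minus_left neg_le_iff_le)
  then show "a \<le> exp (- (real m + 1) * (N + real m + 1))" using a(2) by linarith
  have "N \<le> exp N" using exp_ge_add_one_self[of N] by linarith
  then have "a * N \<le> exp (- M * N) * exp N"
    using a N by (intro mult_mono) auto
  also have "\<dots> = exp (- ((M - 1) * N))" by (simp add: exp_add[symmetric] algebra_simps)
  also have "\<dots> \<le> exp (- (M - 1))" using M(2) mult_left_mono[OF N, of "M - 1"] by simp
  also have "\<dots> \<le> exp (ln p - real m * (real m + 2))" using M(3) by simp
  also have "\<dots> = p * exp (- (real m * (real m + 2)))" using p by (simp add: exp_diff exp_minus divide_inverse)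
  finally show "a * N \<le> p * exp (- (real m * (real m + 2)))" .
  have "a * exp (real m * (real m + 2)) * (1 + real m / p)
      \<le> exp (- M) * exp (real m * (real m + 2)) * exp (ln (1 + real m / p))"
    using aM p by (intro mult_mono) (auto simp: add_pos_nonneg)
  also have "\<dots> = exp (- M + real m * (real m + 2) + ln (1 + real m / p))" by (simp only: exp_add)
  also have "\<dots> \<le> 1" using M(4) by simp
  finally show "a * exp (real m * (real m + 2)) * (1 + real m / p) \<le> 1" .
qed

lemma exists_admissible:
  fixes \<omega> :: "real^'n" and kbar :: "nat \<Rightarrow> int^'n"
  assumes kbar_l: "\<forall>j. kbar j $ l = 0"
    and lim: "filterlim (\<lambda>j. ln \<bar>\<Sum>i\<in>UNIV - {l}. of_int (kbar j $ i) * \<omega> $ i\<bar>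
                            / real_of_int (supnorm_int (kbar j))) at_bot sequentially"
    and p: "0 < p"
  shows "\<exists>j. admissible (sup_norm (kbar j)) (sqrt \<bar>int_inner (kbar j) \<omega>\<bar>) m p"
proof -
  define M where "M = (real m + 1)\<^sup>2 + (real m + 1) + real m * (real m + 2) + \<bar>ln p\<bar> + ln (1 + real m / p) + 1"
  have M: "1 \<le> M" using p unfolding M_def by (simp add: add_nonneg_nonneg)
  obtain j where j: "ln \<bar>\<Sum>i\<in>UNIV - {l}. of_int (kbar j $ i) * \<omega> $ i\<bar>
      / real_of_int (supnorm_int (kbar j)) \<le> - 2 * M"
    using lim unfolding filterlim_at_bot eventually_sequentially by blast
  define L where "L = \<bar>int_inner (kbar j) \<omega>\<bar>"
  define N where "N = sup_norm (kbar j)"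
  have "int_inner (kbar j) \<omega> = (\<Sum>i\<in>UNIV - {l}. of_int (kbar j $ i) * \<omega> $ i)"
    unfolding int_inner_def using sum.remove[of UNIV l "\<lambda>i. of_int (kbar j $ i) * \<omega> $ i"] kbar_l
    by simp
  then have ratio: "ln L / N \<le> - 2 * M" using j unfolding L_def N_def sup_norm_def by simp
  then have "N \<noteq> 0" using M by auto
  then have "0 < supnorm_int (kbar j)"
    using sup_norm_nonneg[of "kbar j"] unfolding N_def sup_norm_def by simp
  then have N: "1 \<le> N" unfolding N_def sup_norm_def by simp
  then have lnL: "ln L \<le> - 2 * M * N" using ratio by (simp add: divide_le_eq)
  moreover have "0 < M * N" using M N by simp
  ultimately have "L \<noteq> 0" by auto
  then have L: "0 < L" unfolding L_def by simp
  have "L = exp (ln L)" using L by simp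
  also have "\<dots> \<le> exp (- M * N) ^ 2" using lnL by (simp add: power2_eq_square flip: exp_add)
  finally have "sqrt L \<le> exp (- M * N)" using real_sqrt_le_mono by fastforce
  then have "admissible N (sqrt L) m p"
    unfolding M_def using p N L by (intro admissible_if_le_exp) auto
  then show ?thesis unfolding L_def N_def by blast
qed

theorem theoremG:
  fixes \<omega> :: "real^'n" and l :: 'n and kbar :: "nat \<Rightarrow> int^'n"
  assumes "CARD('n) \<ge> 3"
    and "nonresonant \<omega>"
    and "\<forall>j. kbar j $ l = 0"
    and "filterlim (\<lambda>j. ln \<bar>\<Sum>i\<in>UNIV - {l}. of_int (kbar j $ i) * \<omega> $ i\<bar>
                          / real_of_int (supnorm_int (kbar j))) at_bot sequentially"
  shows "\<exists>H. real_entire_ham H \<and>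
     (\<exists>C \<delta>. \<delta> > 0 \<and> (\<forall>\<theta> r. norm r < \<delta> \<longrightarrow> \<bar>H \<theta> r - \<omega> \<bullet> r\<bar> \<le> C * (norm r)\<^sup>2)) \<and>
     (\<forall>\<theta> r. r $ l \<noteq> 0 \<longrightarrow>
        (\<exists>x. ham_traj H (\<theta>, r) x) \<and>
        (\<forall>x. ham_traj H (\<theta>, r) x \<longrightarrow> (\<forall>B T. \<exists>t\<ge>T. norm (snd (x t)) > B))) \<and>
     is_BNF H (\<lambda>r. \<omega> \<bullet> r)"
proof -
  define g where "g j = sqrt \<bar>int_inner (kbar j) \<omega>\<bar>" for j
  obtain X where X: "\<And>j. admissible (sup_norm (kbar (X j))) (g (X j)) j (prev_sq (\<lambda>i. g (X i)) j)"
    using recursive_choice_prev_sq[where P="\<lambda>m p j. admissible (sup_norm (kbar j)) (g j) m p" and g=g]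
      exists_admissible[OF assms(3,4)] unfolding g_def admissible_def by blast
  interpret sine_series_ham \<omega> l "\<lambda>j. kbar (X j)" "\<lambda>j. g (X j)"
    using assms(3) X by unfold_locales (simp_all add: g_def)
  have "\<exists>C \<delta>. \<delta> > 0 \<and> (\<forall>\<theta> r. norm r < \<delta> \<longrightarrow> \<bar>ham \<theta> r - \<omega> \<bullet> r\<bar> \<le> C * (norm r)\<^sup>2)"
    using ham_quadratic by (intro exI[of _ "\<Sum>j. g (X j)"] exI[of _ 1]) auto
  then show ?thesis using real_entire_ham ham_traj_unbounded is_BNF_ham by blast
qed

end
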